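(* Let $\lambda\in\mathfrak{h}^*$ and $V=V(\lambda,\mathfrak{b})$ the irreducible $\mathfrak{g}$-module of $\mathfrak{b}$-highest weight $\lambda$, and suppose its dual $V^*$ is generated by a lowest functional $f_-$ of weight $-\lambda$, with $\mathfrak{n}^-_{\mathfrak{b}}f_-=0$ (so $\mathfrak{U}(\mathfrak{b}^-)$ acts on $f_-$ by a character). If $V$ is $\mathfrak{k}$-spherical and $v^{\mathfrak{k}}\in V^{\mathfrak{k}}$ is nonzero, then $\langle v^{\mathfrak{k}},f_-\rangle\neq0$, where $\langle\cdot,\cdot\rangle$ is the canonical pairing.
   Context: Over $\mathbb{C}$, fix $p,q\ge1$, $\mathfrak{g}=\mathfrak{gl}(2p|2q)$; $A_{a,b}=E_{a,b}$ ($1\le a,b\le2p$), $D_{a,b}=E_{2p+a,2p+b}$. $J=\tfrac12\mathrm{diag}(I_p,-I_p,I_q,-I_q)$ and $\mathfrak{k}$ its centralizer ($\cong\mathfrak{gl}(p|q)\oplus\mathfrak{gl}(p|q)$). With $\mathsf{i}=\sqrt{-1}$: $x_i=\mathsf{i}(A_{i,p+i}-A_{p+i,i})$, $x'_i=A_{i,i}+A_{p+i,p+i}$, $y_j=\mathsf{i}(D_{j,q+j}-D_{q+j,j})$, $y'_j=D_{j,j}+D_{q+j,q+j}$; $\mathfrak{h}=\mathrm{span}\{x_i,y_j,x'_i,y'_j\}$, with dual basis $\alpha^B_i,\alpha^F_j,\tau^B_i,\tau^F_j$. $\chi_{\pm i}=\tau^B_i\pm\alpha^B_i$, $\eta_{\pm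 j}=\tau^F_j\pm\alpha^F_j$; $\mathfrak{b}\supseteq\mathfrak{h}$ is the Borel with positive roots $X_r-X_s$ ($r<s$) for the list $(\chi_{+1},..,\chi_{+p},\eta_{+1},..,\eta_{+q},\eta_{-q},..,\eta_{-1},\chi_{-p},..,\chi_{-1})$, $\mathfrak{b}^-=\mathfrak{h}\oplus\mathfrak{n}^-_{\mathfrak{b}}$ the opposite Borel ($\mathfrak{n}^-_{\mathfrak{b}}$ the sum of negative root spaces). One has $\mathfrak{g}=\mathfrak{k}+\mathfrak{b}^-$. A module $V$ is $\mathfrak{k}$-spherical if $V^{\mathfrak{k}}:=\{v:Xv=0\ \forall X\in\mathfrak{k}\}\ne0$; $V^*$ carries the contragredient action. *)

theory Defs
  imports Complex_Main "Jordan_Normal_Form.Matrix"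
begin

text \<open>The Lie superalgebra gl(2p|2q): complex N x N matrices, N = 2p+2q, indices 0-based.
  Index r is odd iff r >= 2p.\<close>

definition dimN :: "nat \<Rightarrow> nat \<Rightarrow> nat" where
  "dimN p q = 2*p + 2*q"

definition idx_odd :: "nat \<Rightarrow> nat \<Rightarrow> bool" where
  "idx_odd p r = (2*p \<le> r)"

definition even_mat :: "nat \<Rightarrow> nat \<Rightarrow> complex mat \<Rightarrow> bool" where
  "even_mat p q X = (X \<in> carrier_mat (dimN p q) (dimN p q) \<and>
     (\<forall>r<dimN p q. \<forall>c<dimN p q. idx_odd p r \<noteq> idx_odd p c \<longrightarrow> X $$ (r,c) = 0))"

definition odd_mat :: "nat \<Rightarrow> nat \<Rightarrow> complex mat \<Rightarrow> bool" where
  "odd_mat p q X = (X \<in> carrier_mat (dimN p q) (dimN p q) \<and>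
     (\<forall>r<dimN p q. \<forall>c<dimN p q. idx_odd p r = idx_odd p c \<longrightarrow> X $$ (r,c) = 0))"

definition hom_mat :: "nat \<Rightarrow> nat \<Rightarrow> bool \<Rightarrow> complex mat \<Rightarrow> bool" where
  "hom_mat p q a X = (if a then odd_mat p q X else even_mat p q X)"

definition even_part :: "nat \<Rightarrow> nat \<Rightarrow> complex mat \<Rightarrow> complex mat" where
  "even_part p q X = mat (dimN p q) (dimN p q)
     (\<lambda>(r,c). if idx_odd p r = idx_odd p c then X $$ (r,c) else 0)"

definition odd_part :: "nat \<Rightarrow> nat \<Rightarrow> complex mat \<Rightarrow> complex mat" where
  "odd_part p q X = mat (dimN p q) (dimN p q)
     (\<lambda>(r,c). if idx_odd p r \<noteq> idx_odd p c then X $$ (r,c) else 0)"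

definition emat :: "nat \<Rightarrow> nat \<Rightarrow> nat \<Rightarrow> complex mat" where
  "emat N a b = mat N N (\<lambda>(r,c). if r = a \<and> c = b then 1 else 0)"

text \<open>Basis of the Cartan subalgebra h (0-based i < p, j < q):
  A_{a,b} = E_{a,b}, D_{a,b} = E_{2p+a,2p+b}.\<close>
definition xB :: "nat \<Rightarrow> nat \<Rightarrow> nat \<Rightarrow> complex mat" where
  "xB p q i = \<i> \<cdot>\<^sub>m (emat (dimN p q) i (p+i) - emat (dimN p q) (p+i) i)"
definition xB' :: "nat \<Rightarrow> nat \<Rightarrow> nat \<Rightarrow> complex mat" where
  "xB' p q i = emat (dimN p q) i i + emat (dimN p q) (p+i) (p+i)"
definition yF :: "nat \<Rightarrow> nat \<Rightarrow> nat \<Rightarrow> complex mat" where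
  "yF p q j = \<i> \<cdot>\<^sub>m (emat (dimN p q) (2*p+j) (2*p+q+j) - emat (dimN p q) (2*p+q+j) (2*p+j))"
definition yF' :: "nat \<Rightarrow> nat \<Rightarrow> nat \<Rightarrow> complex mat" where
  "yF' p q j = emat (dimN p q) (2*p+j) (2*p+j) + emat (dimN p q) (2*p+q+j) (2*p+q+j)"

definition cartan :: "nat \<Rightarrow> nat \<Rightarrow> complex mat set" where
  "cartan p q = {H. \<exists>s t u w. H = mat (dimN p q) (dimN p q) (\<lambda>rc.
      (\<Sum>i<p. s i * (xB p q i $$ rc) + t i * (xB' p q i $$ rc)) +
      (\<Sum>j<q. u j * (yF p q j $$ rc) + w j * (yF' p q j $$ rc)))}"

text \<open>Dual basis alpha^B_i, tau^B_i, alpha^F_j, tau^F_j of h^* (correct on elements of h: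
  coordinates read off from the matrix entries).\<close>
definition alphaB :: "nat \<Rightarrow> nat \<Rightarrow> nat \<Rightarrow> complex mat \<Rightarrow> complex" where
  "alphaB p q i H = - \<i> * H $$ (i, p+i)"
definition tauB :: "nat \<Rightarrow> nat \<Rightarrow> nat \<Rightarrow> complex mat \<Rightarrow> complex" where
  "tauB p q i H = H $$ (i, i)"
definition alphaF :: "nat \<Rightarrow> nat \<Rightarrow> nat \<Rightarrow> complex mat \<Rightarrow> complex" where
  "alphaF p q j H = - \<i> * H $$ (2*p+j, 2*p+q+j)"
definition tauF :: "nat \<Rightarrow> nat \<Rightarrow> nat \<Rightarrow> complex mat \<Rightarrow> complex" where
  "tauF p q j H = H $$ (2*p+j, 2*p+j)"

text \<open>The ordered list (chi_{+1},..,chi_{+p},eta_{+1},..,eta_{+q},eta_{-q},..,eta_{-1},chi_{-p},..,chi_{-1}),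
  entry k (0-based, k < 2p+2q).\<close>
definition wt :: "nat \<Rightarrow> nat \<Rightarrow> nat \<Rightarrow> complex mat \<Rightarrow> complex" where
  "wt p q k H =
    (if k < p then tauB p q k H + alphaB p q k H
     else if k < p + q then tauF p q (k - p) H + alphaF p q (k - p) H
     else if k < p + 2*q then tauF p q (p + 2*q - 1 - k) H - alphaF p q (p + 2*q - 1 - k) H
     else tauB p q (2*p + 2*q - 1 - k) H - alphaB p q (2*p + 2*q - 1 - k) H)"

definition rootsp :: "nat \<Rightarrow> nat \<Rightarrow> (complex mat \<Rightarrow> complex) \<Rightarrow> complex mat set" where
  "rootsp p q \<beta> = {X \<in> carrier_mat (dimN p q) (dimN p q).
      \<forall>H\<in>cartan p q. H * X - X * H = \<beta> H \<cdot>\<^sub>m X}"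

definition pos_root_vec :: "nat \<Rightarrow> nat \<Rightarrow> complex mat \<Rightarrow> bool" where
  "pos_root_vec p q X = (\<exists>r s. r < s \<and> s < dimN p q \<and>
      X \<in> rootsp p q (\<lambda>H. wt p q r H - wt p q s H))"
definition neg_root_vec :: "nat \<Rightarrow> nat \<Rightarrow> complex mat \<Rightarrow> bool" where
  "neg_root_vec p q X = (\<exists>r s. s < r \<and> r < dimN p q \<and>
      X \<in> rootsp p q (\<lambda>H. wt p q r H - wt p q s H))"

definition Jmat :: "nat \<Rightarrow> nat \<Rightarrow> complex mat" where
  "Jmat p q = mat (dimN p q) (dimN p q) (\<lambda>(r,c). if r = c then
      (if r < p \<or> (2*p \<le> r \<and> r < 2*p + q) then 1/2 else -1/2) else 0)"

text \<open>k = centralizer of J (J is even, so the super bracket is the commutator)\<close>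
definition kset :: "nat \<Rightarrow> nat \<Rightarrow> complex mat set" where
  "kset p q = {X \<in> carrier_mat (dimN p q) (dimN p q). Jmat p q * X - X * Jmat p q = 0\<^sub>m (dimN p q) (dimN p q)}"

definition is_subsp :: "(complex \<Rightarrow> 'v \<Rightarrow> 'v) \<Rightarrow> 'v::ab_group_add set \<Rightarrow> bool" where
  "is_subsp sc S = (0 \<in> S \<and> (\<forall>x\<in>S. \<forall>y\<in>S. x + y \<in> S) \<and> (\<forall>c. \<forall>x\<in>S. sc c x \<in> S))"

definition is_lin_fun :: "(complex \<Rightarrow> 'v \<Rightarrow> 'v) \<Rightarrow> ('v::ab_group_add \<Rightarrow> complex) \<Rightarrow> bool" where
  "is_lin_fun sc f = ((\<forall>x y. f (x + y) = f x + f y) \<and> (\<forall>c x. f (sc c x) = c * f x))"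

text \<open>A (Z/2-graded) gl(2p|2q)-module: vector space (type 'v, scalar mult sc),
  grading V = V0 (+) V1, action act.\<close>
definition gmodule :: "nat \<Rightarrow> nat \<Rightarrow> (complex \<Rightarrow> 'v \<Rightarrow> 'v) \<Rightarrow> 'v::ab_group_add set \<Rightarrow> 'v set
     \<Rightarrow> (complex mat \<Rightarrow> 'v \<Rightarrow> 'v) \<Rightarrow> bool" where
  "gmodule p q sc V0 V1 act = (vector_space sc \<and> is_subsp sc V0 \<and> is_subsp sc V1 \<and>
     V0 \<inter> V1 = {0} \<and> (\<forall>v. \<exists>a\<in>V0. \<exists>b\<in>V1. v = a + b) \<and>
     (\<forall>X\<in>carrier_mat (dimN p q) (dimN p q).
        (\<forall>v w. act X (v + w) = act X v + act X w) \<and> (\<forall>c v. act X (sc c v) = sc c (act X v))) \<and>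
     (\<forall>X\<in>carrier_mat (dimN p q) (dimN p q). \<forall>Y\<in>carrier_mat (dimN p q) (dimN p q). \<forall>v.
        act (X + Y) v = act X v + act Y v) \<and>
     (\<forall>X\<in>carrier_mat (dimN p q) (dimN p q). \<forall>c v. act (c \<cdot>\<^sub>m X) v = sc c (act X v)) \<and>
     (\<forall>X. even_mat p q X \<longrightarrow> act X ` V0 \<subseteq> V0 \<and> act X ` V1 \<subseteq> V1) \<and>
     (\<forall>X. odd_mat p q X \<longrightarrow> act X ` V0 \<subseteq> V1 \<and> act X ` V1 \<subseteq> V0) \<and>
     (\<forall>a b X Y v. hom_mat p q a X \<longrightarrow> hom_mat p q b Y \<longrightarrow>
        (let \<sigma> = (if a \<and> b then -1 else 1 :: complex) in
         act (X * Y - \<sigma> \<cdot>\<^sub>m (Y * X)) v = act X (act Y v) - sc \<sigma> (act Y (act X v)))))"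

definition proj0 :: "'v::ab_group_add set \<Rightarrow> 'v set \<Rightarrow> 'v \<Rightarrow> 'v" where
  "proj0 V0 V1 v = (THE a. a \<in> V0 \<and> v - a \<in> V1)"

text \<open>Contragredient action on V^*: (X f)(v) = -(-1)^{|X||f|} f(X v), extended linearly.\<close>
definition dual_act :: "nat \<Rightarrow> nat \<Rightarrow> 'v::ab_group_add set \<Rightarrow> 'v set \<Rightarrow> (complex mat \<Rightarrow> 'v \<Rightarrow> 'v)
     \<Rightarrow> complex mat \<Rightarrow> ('v \<Rightarrow> complex) \<Rightarrow> ('v \<Rightarrow> complex)" where
  "dual_act p q V0 V1 act X f = (\<lambda>v.
      - f (act (even_part p q X) v)
      - f (proj0 V0 V1 (act (odd_part p q X) v))
      + f (act (odd_part p q X) v - proj0 V0 V1 (act (odd_part p q X) v)))"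

inductive_set gen_dual :: "nat \<Rightarrow> nat \<Rightarrow> (complex \<Rightarrow> 'v \<Rightarrow> 'v) \<Rightarrow> 'v::ab_group_add set \<Rightarrow> 'v set
     \<Rightarrow> (complex mat \<Rightarrow> 'v \<Rightarrow> 'v) \<Rightarrow> ('v \<Rightarrow> complex) \<Rightarrow> ('v \<Rightarrow> complex) set"
  for p q sc V0 V1 act f where
  base: "f \<in> gen_dual p q sc V0 V1 act f"
| add: "g \<in> gen_dual p q sc V0 V1 act f \<Longrightarrow> h \<in> gen_dual p q sc V0 V1 act f \<Longrightarrow>
        (\<lambda>v. g v + h v) \<in> gen_dual p q sc V0 V1 act f"
| smult: "g \<in> gen_dual p q sc V0 V1 act f \<Longrightarrow> (\<lambda>v. c * g v) \<in> gen_dual p q sc V0 V1 act f"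
| act: "g \<in> gen_dual p q sc V0 V1 act f \<Longrightarrow> X \<in> carrier_mat (dimN p q) (dimN p q) \<Longrightarrow>
        dual_act p q V0 V1 act X g \<in> gen_dual p q sc V0 V1 act f"

definition irreducible_gmod :: "nat \<Rightarrow> nat \<Rightarrow> (complex \<Rightarrow> 'v \<Rightarrow> 'v) \<Rightarrow> 'v::ab_group_add set \<Rightarrow> 'v set
     \<Rightarrow> (complex mat \<Rightarrow> 'v \<Rightarrow> 'v) \<Rightarrow> bool" where
  "irreducible_gmod p q sc V0 V1 act = ((UNIV :: 'v set) \<noteq> {0} \<and>
     (\<forall>W. is_subsp sc W \<and> (\<forall>X\<in>carrier_mat (dimN p q) (dimN p q). act X ` W \<subseteq> W) \<and>
          (\<forall>w\<in>W. proj0 V0 V1 w \<in> W) \<longrightarrow> W = {0} \<or> W = UNIV))"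

end

theory Submission
  imports Defs
begin

text \<open>Suppose \<open>\<langle>v\<^sup>k, f\<^sub>-\<rangle> = 0\<close>. Since \<open>\<gg> = \<kk> + \<bb>\<^sup>-\<close>, a PBW-type filtration
  argument gives \<open>U(\<gg>) v\<^sup>k = U(\<bb>\<^sup>-) U(\<kk>) v\<^sup>k = U(\<bb>\<^sup>-) v\<^sup>k\<close>; as \<open>f\<^sub>-\<close> is an
  eigenfunctional of \<open>\<hh>\<close> killed by \<open>\<nn>\<^sup>-\<close>, it vanishes on all of \<open>U(\<gg>) v\<^sup>k\<close>.
  The vectors \<open>v\<close> with \<open>f\<^sub>-(U(\<gg>) v) = 0\<close> form a submodule, graded because \<open>f\<^sub>-\<close> is
  homogeneous (\<open>V = U(\<nn>\<^sup>-) v\<^sub>\<lambda>\<close> for a homogeneous highest weight vector \<open>v\<^sub>\<lambda>\<close>, by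
  \<open>\<gg> = \<nn>\<^sup>- + \<bb>\<close> and irreducibility), and proper because \<open>f\<^sub>- \<noteq> 0\<close> generates \<open>V\<^sup>*\<close>.
  By irreducibility it is zero, contradicting \<open>v\<^sup>k \<noteq> 0\<close>.

  Both decompositions of \<open>\<gg>\<close> are checked on the basis \<open>u\<^sub>k w\<^sub>l\<^sup>T\<close> of \<open>\<hh>\<close>-weight
  vectors, where \<open>u\<^sub>k\<close>, \<open>w\<^sub>l\<close> are column and row eigenvectors of \<open>\<hh>\<close> for the weights
  of the ordered list defining \<open>\<bb>\<close>; such a matrix is a root vector for \<open>X\<^sub>k - X\<^sub>l\<close>.
  For \<open>k < l\<close> it is, up to a negative root vector, an element of \<open>\<kk>\<close>: adding the matrix
  for the opposite weights \<open>\<chi>\<^sub>\<mp>\<^sub>i\<close>, \<open>\<eta>\<^sub>\<mp>\<^sub>j\<close> (which come in reversed order) kills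
  the entries that do not commute with \<open>J\<close>.\<close>

section \<open>The Cartan subalgebra\<close>

text \<open>\<open>\<hh>\<close> is block diagonal with \<open>2 \<times> 2\<close> blocks on the index pairs \<open>{i, p+i}\<close> and
  \<open>{2p+j, 2p+q+j}\<close>; \<open>pair_base p q r\<close> is the first index of the pair containing \<open>r\<close>,
  and \<open>cartan_entry p q d s\<close> is the element acting on the block at \<open>b\<close> by
  \<open>[[d b, \<i> s b], [-\<i> s b, d b]]\<close>.\<close>

definition pair_base :: "nat \<Rightarrow> nat \<Rightarrow> nat \<Rightarrow> nat" where
  "pair_base p q r = (if r < p then r else if r < 2*p then r - p else if r < 2*p+q then r else r - q)"

definition cartan_entry ::
    "nat \<Rightarrow> nat \<Rightarrow> (nat \<Rightarrow> complex) \<Rightarrow> (nat \<Rightarrow> complex) \<Rightarrow> nat \<Rightarrow> nat \<Rightarrow> complex" where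
  "cartan_entry p q d s r c =
     (if pair_base p q r \<noteq> pair_base p q c then 0
      else if r = c then d (pair_base p q r)
      else if r = pair_base p q r then \<i> * s (pair_base p q r)
      else - \<i> * s (pair_base p q r))"

lemma pair_base_cases:
  "r < dimN p q \<Longrightarrow> pair_base p q r < p \<or> (2*p \<le> pair_base p q r \<and> pair_base p q r < 2*p + q)"
  by (auto simp: pair_base_def dimN_def)

lemma idx_odd_pair_base: "r < dimN p q \<Longrightarrow> idx_odd p (pair_base p q r) = idx_odd p r"
  by (auto simp: pair_base_def dimN_def idx_odd_def)

lemma xB_term:
  assumes "r < dimN p q" "c < dimN p q" "i < p"
  shows "s i * xB p q i $$ (r,c) + d i * xB' p q i $$ (r,c) =
    (if pair_base p q r = i then cartan_entry p q d s r c else 0)"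
  using assms by (auto simp: xB_def xB'_def emat_def dimN_def pair_base_def cartan_entry_def)

lemma yF_term:
  assumes "r < dimN p q" "c < dimN p q" "j < q"
  shows "s (2*p+j) * yF p q j $$ (r,c) + d (2*p+j) * yF' p q j $$ (r,c) =
    (if pair_base p q r = 2*p + j then cartan_entry p q d s r c else 0)"
proof -
  consider "r < 2*p" | "2*p \<le> r" "r < 2*p+q" | "2*p+q \<le> r" by linarith
  then show ?thesis
  proof cases
    case 1
    then show ?thesis using assms
      by (auto simp: yF_def yF'_def emat_def dimN_def pair_base_def)
  next
    case 2
    then show ?thesis using assms
      by (simp add: yF_def yF'_def emat_def dimN_def pair_base_def cartan_entry_def)
  next
    case 3
    then show ?thesis using assms
      by (simp add: yF_def yF'_def emat_def dimN_def pair_base_def cartan_entry_def) auto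
  qed
qed

lemma cartan_sum_entry:
  assumes r: "r < dimN p q" and c: "c < dimN p q"
  shows "(\<Sum>i<p. s i * (xB p q i $$ (r,c)) + t i * (xB' p q i $$ (r,c))) +
      (\<Sum>j<q. u j * (yF p q j $$ (r,c)) + w j * (yF' p q j $$ (r,c))) =
    cartan_entry p q (\<lambda>b. if b < p then t b else w (b - 2*p)) (\<lambda>b. if b < p then s b else u (b - 2*p)) r c"
    (is "?B + ?F = cartan_entry p q ?d ?s r c")
proof -
  let ?b = "pair_base p q r" and ?E = "cartan_entry p q ?d ?s r c"
  have "?B = (\<Sum>i<p. if ?b = i then ?E else 0)"
    using xB_term[OF r c, of _ ?s ?d] by (intro sum.cong) auto
  also have "\<dots> = (if ?b < p then ?E else 0)"
    by (simp add: eq_commute[of ?b])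
  finally have B: "?B = (if ?b < p then ?E else 0)" .
  have "?F = (\<Sum>j<q. if j = ?b - 2*p \<and> 2*p \<le> ?b then ?E else 0)"
    using yF_term[OF r c, of _ ?s ?d] by (intro sum.cong) auto
  also have "\<dots> = (if 2*p \<le> ?b then ?E else 0)"
    using pair_base_cases[OF r] by auto
  finally show ?thesis
    using B pair_base_cases[OF r] by auto
qed

lemma cartan_carrier: "H \<in> cartan p q \<Longrightarrow> H \<in> carrier_mat (dimN p q) (dimN p q)"
  by (auto simp: cartan_def)

lemma cartan_entries:
  assumes "H \<in> cartan p q"
  obtains d s where
    "\<And>r c. r < dimN p q \<Longrightarrow> c < dimN p q \<Longrightarrow> H $$ (r,c) = cartan_entry p q d s r c"
  using assms cartan_sum_entry unfolding cartan_def by fastforce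

lemma cartan_entry_mat_in_cartan:
  "mat (dimN p q) (dimN p q) (\<lambda>(r,c). cartan_entry p q d s r c) \<in> cartan p q"
proof -
  have "cartan_entry p q d s r c =
      (\<Sum>i<p. s i * (xB p q i $$ (r,c)) + d i * (xB' p q i $$ (r,c))) +
      (\<Sum>j<q. s (2*p+j) * (yF p q j $$ (r,c)) + d (2*p+j) * (yF' p q j $$ (r,c)))"
    if "r < dimN p q" "c < dimN p q" for r c
    unfolding cartan_sum_entry[OF that] using pair_base_cases[OF that(1)]
    by (auto simp: cartan_entry_def)
  then show ?thesis
    unfolding cartan_def by (intro CollectI exI[of _ s] exI[of _ d] exI[of _ "\<lambda>j. s (2*p+j)"]
        exI[of _ "\<lambda>j. d (2*p+j)"]) (auto intro!: eq_matI)
qed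

lemma cartan_even:
  assumes "H \<in> cartan p q"
  shows "even_mat p q H"
proof -
  obtain d s where H: "\<And>r c. r < dimN p q \<Longrightarrow> c < dimN p q \<Longrightarrow> H $$ (r,c) = cartan_entry p q d s r c"
    using cartan_entries[OF assms] by blast
  show ?thesis unfolding even_mat_def
  proof (intro conjI allI impI cartan_carrier[OF assms])
    fix r c assume r: "r < dimN p q" and c: "c < dimN p q" and "idx_odd p r \<noteq> idx_odd p c"
    then have "pair_base p q r \<noteq> pair_base p q c"
      using idx_odd_pair_base by metis
    then show "H $$ (r,c) = 0"
      using H[OF r c] by (simp add: cartan_entry_def)
  qed
qed

section \<open>Weight vectors of \<open>\<hh>\<close>\<close>

text \<open>The \<open>k\<close>-th weight of the ordered list lives on the block \<open>{blk_fst p q k, blk_snd p q k}\<close>;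
  \<open>\<chi>\<^sub>+\<^sub>i\<close> and \<open>\<chi>\<^sub>-\<^sub>i\<close> (and \<open>\<eta>\<^sub>\<plusminus>\<^sub>j\<close>) share a block, sit at mirrored positions
  \<open>k\<close> and \<open>opp_idx p q k\<close>, and differ in \<open>blk_sign\<close>.\<close>

definition blk_fst :: "nat \<Rightarrow> nat \<Rightarrow> nat \<Rightarrow> nat" where
  "blk_fst p q k = (if k < p then k else if k < p+q then 2*p + (k-p)
     else if k < p+2*q then 2*p + (p+2*q-1-k) else 2*p+2*q-1-k)"

definition blk_snd :: "nat \<Rightarrow> nat \<Rightarrow> nat \<Rightarrow> nat" where
  "blk_snd p q k = (if k < p then p+k else if k < p+q then 2*p+q+(k-p)
     else if k < p+2*q then 2*p+q+(p+2*q-1-k) else p+(2*p+2*q-1-k))"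

definition blk_sign :: "nat \<Rightarrow> nat \<Rightarrow> nat \<Rightarrow> complex" where
  "blk_sign p q k = (if k < p+q then 1 else -1)"

definition opp_idx :: "nat \<Rightarrow> nat \<Rightarrow> nat \<Rightarrow> nat" where
  "opp_idx p q k = dimN p q - 1 - k"

definition blk_of :: "nat \<Rightarrow> nat \<Rightarrow> nat \<Rightarrow> nat" where
  "blk_of p q r = (if pair_base p q r < p then pair_base p q r else pair_base p q r - p)"

lemma blk_facts:
  assumes "k < dimN p q"
  shows "blk_fst p q k < dimN p q" "blk_snd p q k < dimN p q" "blk_fst p q k \<noteq> blk_snd p q k"
    "pair_base p q (blk_fst p q k) = blk_fst p q k" "pair_base p q (blk_snd p q k) = blk_fst p q k"
    "idx_odd p (blk_snd p q k) = idx_odd p (blk_fst p q k)"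
  using assms by (auto simp: blk_fst_def blk_snd_def pair_base_def dimN_def idx_odd_def)

lemma blk_opp:
  assumes "k < dimN p q"
  shows "opp_idx p q k < dimN p q"
    "blk_fst p q (opp_idx p q k) = blk_fst p q k" "blk_snd p q (opp_idx p q k) = blk_snd p q k"
    "blk_sign p q (opp_idx p q k) = - blk_sign p q k"
  using assms by (auto simp: blk_fst_def blk_snd_def blk_sign_def opp_idx_def dimN_def)

lemma pair_base_eq_blk_fst_iff:
  assumes "k < dimN p q" "r < dimN p q"
  shows "pair_base p q r = blk_fst p q k \<longleftrightarrow> r = blk_fst p q k \<or> r = blk_snd p q k"
  using assms by (auto simp: blk_fst_def blk_snd_def pair_base_def dimN_def)

lemma blk_of_facts:
  assumes "r < dimN p q"
  shows "blk_of p q r < dimN p q" "r = blk_fst p q (blk_of p q r) \<or> r = blk_snd p q (blk_of p q r)"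
  using assms by (auto simp: blk_of_def blk_fst_def blk_snd_def pair_base_def dimN_def)

lemma wt_blk:
  assumes "k < dimN p q"
  shows "wt p q k H =
    H $$ (blk_fst p q k, blk_fst p q k) - blk_sign p q k * \<i> * H $$ (blk_fst p q k, blk_snd p q k)"
  using assms
  by (auto simp: wt_def blk_fst_def blk_snd_def blk_sign_def tauB_def alphaB_def tauF_def alphaF_def dimN_def)

lemma cartan_entry_blk:
  assumes "k < dimN p q"
  shows "cartan_entry p q d s (blk_fst p q k) (blk_fst p q k) = d (blk_fst p q k)"
    "cartan_entry p q d s (blk_snd p q k) (blk_snd p q k) = d (blk_fst p q k)"
    "cartan_entry p q d s (blk_fst p q k) (blk_snd p q k) = \<i> * s (blk_fst p q k)"
    "cartan_entry p q d s (blk_snd p q k) (blk_fst p q k) = - \<i> * s (blk_fst p q k)"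
  using blk_facts[OF assms] by (auto simp: cartan_entry_def)

lemma cartan_entry_off_blk:
  assumes "k < dimN p q" "r < dimN p q" "r \<noteq> blk_fst p q k" "r \<noteq> blk_snd p q k"
  shows "cartan_entry p q d s r (blk_fst p q k) = 0" "cartan_entry p q d s r (blk_snd p q k) = 0"
    "cartan_entry p q d s (blk_fst p q k) r = 0" "cartan_entry p q d s (blk_snd p q k) r = 0"
  using blk_facts[OF assms(1)] pair_base_eq_blk_fst_iff[OF assms(1,2)] assms(3,4)
  by (auto simp: cartan_entry_def)

definition eig_col :: "nat \<Rightarrow> nat \<Rightarrow> nat \<Rightarrow> nat \<Rightarrow> complex" where
  "eig_col p q k r =
     (if r = blk_fst p q k then 1 else if r = blk_snd p q k then - blk_sign p q k * \<i> else 0)"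

definition eig_row :: "nat \<Rightarrow> nat \<Rightarrow> nat \<Rightarrow> nat \<Rightarrow> complex" where
  "eig_row p q k c =
     (if c = blk_fst p q k then 1/2 else if c = blk_snd p q k then blk_sign p q k * \<i> / 2 else 0)"

lemma sum_times_eig_col:
  assumes "k < dimN p q"
  shows "(\<Sum>m<dimN p q. f m * eig_col p q k m) =
    f (blk_fst p q k) - blk_sign p q k * \<i> * f (blk_snd p q k)"
proof -
  note blk = blk_facts[OF assms]
  have "(\<Sum>m<dimN p q. f m * eig_col p q k m) =
      (\<Sum>m<dimN p q. (if m = blk_fst p q k then f m else 0)
        + (if m = blk_snd p q k then - blk_sign p q k * \<i> * f m else 0))"
    using blk(3) by (intro sum.cong) (auto simp: eig_col_def)
  also have "\<dots> = f (blk_fst p q k) - blk_sign p q k * \<i> * f (blk_snd p q k)"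
    using blk(1,2) by (simp add: sum.distrib)
  finally show ?thesis .
qed

lemma sum_eig_row_times:
  assumes "k < dimN p q"
  shows "(\<Sum>m<dimN p q. eig_row p q k m * f m) =
    f (blk_fst p q k) / 2 + blk_sign p q k * \<i> / 2 * f (blk_snd p q k)"
proof -
  note blk = blk_facts[OF assms]
  have "(\<Sum>m<dimN p q. eig_row p q k m * f m) =
      (\<Sum>m<dimN p q. (if m = blk_fst p q k then f m / 2 else 0)
        + (if m = blk_snd p q k then blk_sign p q k * \<i> / 2 * f m else 0))"
    using blk(3) by (intro sum.cong) (auto simp: eig_row_def)
  also have "\<dots> = f (blk_fst p q k) / 2 + blk_sign p q k * \<i> / 2 * f (blk_snd p q k)"
    using blk(1,2) by (simp add: sum.distrib)
  finally show ?thesis .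
qed

lemma cartan_entries_at_blk:
  assumes H: "H \<in> cartan p q" and k: "k < dimN p q"
  obtains a b where
    "H $$ (blk_fst p q k, blk_fst p q k) = a" "H $$ (blk_snd p q k, blk_snd p q k) = a"
    "H $$ (blk_fst p q k, blk_snd p q k) = \<i> * b" "H $$ (blk_snd p q k, blk_fst p q k) = - \<i> * b"
    "\<And>r. r < dimN p q \<Longrightarrow> r \<noteq> blk_fst p q k \<Longrightarrow> r \<noteq> blk_snd p q k \<Longrightarrow>
       H $$ (r, blk_fst p q k) = 0 \<and> H $$ (r, blk_snd p q k) = 0 \<and>
       H $$ (blk_fst p q k, r) = 0 \<and> H $$ (blk_snd p q k, r) = 0"
proof -
  obtain d s where H_entry:
    "\<And>r c. r < dimN p q \<Longrightarrow> c < dimN p q \<Longrightarrow> H $$ (r,c) = cartan_entry p q d s r c"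
    using cartan_entries[OF H] by blast
  note blk = blk_facts[OF k]
  show thesis
  proof (rule that[of "d (blk_fst p q k)" "s (blk_fst p q k)"])
    fix r assume "r < dimN p q" "r \<noteq> blk_fst p q k" "r \<noteq> blk_snd p q k"
    then show "H $$ (r, blk_fst p q k) = 0 \<and> H $$ (r, blk_snd p q k) = 0 \<and>
       H $$ (blk_fst p q k, r) = 0 \<and> H $$ (blk_snd p q k, r) = 0"
      using blk(1,2) by (simp add: H_entry cartan_entry_off_blk[OF k])
  qed (use blk(1,2) in \<open>simp_all add: H_entry cartan_entry_blk[OF k]\<close>)
qed

lemma blk_sign_cases: "blk_sign p q k = 1 \<or> blk_sign p q k = -1"
  by (simp add: blk_sign_def)

lemma cartan_mult_eig_col:
  assumes H: "H \<in> cartan p q" and k: "k < dimN p q" and r: "r < dimN p q"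
  shows "(\<Sum>m<dimN p q. H $$ (r,m) * eig_col p q k m) = wt p q k H * eig_col p q k r"
proof -
  obtain a b where Hab:
    "H $$ (blk_fst p q k, blk_fst p q k) = a" "H $$ (blk_snd p q k, blk_snd p q k) = a"
    "H $$ (blk_fst p q k, blk_snd p q k) = \<i> * b" "H $$ (blk_snd p q k, blk_fst p q k) = - \<i> * b"
    and H0: "\<And>r. r < dimN p q \<Longrightarrow> r \<noteq> blk_fst p q k \<Longrightarrow> r \<noteq> blk_snd p q k \<Longrightarrow>
       H $$ (r, blk_fst p q k) = 0 \<and> H $$ (r, blk_snd p q k) = 0 \<and>
       H $$ (blk_fst p q k, r) = 0 \<and> H $$ (blk_snd p q k, r) = 0"
    using cartan_entries_at_blk[OF H k] by blast
  have "blk_fst p q k \<noteq> blk_snd p q k" by (rule blk_facts(3)[OF k])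
  then show ?thesis
    unfolding sum_times_eig_col[OF k] wt_blk[OF k] Hab
    using H0[OF r] blk_sign_cases[of p q k]
    by (cases "r = blk_fst p q k"; cases "r = blk_snd p q k") (auto simp: eig_col_def Hab algebra_simps)
qed

lemma eig_row_mult_cartan:
  assumes H: "H \<in> cartan p q" and k: "k < dimN p q" and c: "c < dimN p q"
  shows "(\<Sum>m<dimN p q. eig_row p q k m * H $$ (m,c)) = wt p q k H * eig_row p q k c"
proof -
  obtain a b where Hab:
    "H $$ (blk_fst p q k, blk_fst p q k) = a" "H $$ (blk_snd p q k, blk_snd p q k) = a"
    "H $$ (blk_fst p q k, blk_snd p q k) = \<i> * b" "H $$ (blk_snd p q k, blk_fst p q k) = - \<i> * b"
    and H0: "\<And>r. r < dimN p q \<Longrightarrow> r \<noteq> blk_fst p q k \<Longrightarrow> r \<noteq> blk_snd p q k \<Longrightarrow>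
       H $$ (r, blk_fst p q k) = 0 \<and> H $$ (r, blk_snd p q k) = 0 \<and>
       H $$ (blk_fst p q k, r) = 0 \<and> H $$ (blk_snd p q k, r) = 0"
    using cartan_entries_at_blk[OF H k] by blast
  have "blk_fst p q k \<noteq> blk_snd p q k" by (rule blk_facts(3)[OF k])
  then show ?thesis
    unfolding sum_eig_row_times[OF k] wt_blk[OF k] Hab
    using H0[OF c] blk_sign_cases[of p q k]
    by (cases "c = blk_fst p q k"; cases "c = blk_snd p q k") (auto simp: eig_row_def Hab algebra_simps)
qed

section \<open>Root vectors and the decompositions \<open>\<gg> = \<kk> + \<bb>\<^sup>- = \<nn>\<^sup>- + \<bb>\<close>\<close>

lemma mult_mat_entry:
  assumes "A \<in> carrier_mat n n" "B \<in> carrier_mat n n" "i < n" "j < n"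
  shows "(A * B) $$ (i,j) = (\<Sum>m<n. A $$ (i,m) * B $$ (m,j))"
  using assms by (auto simp: scalar_prod_def atLeast0LessThan intro!: sum.cong)

definition root_mat :: "nat \<Rightarrow> nat \<Rightarrow> nat \<Rightarrow> nat \<Rightarrow> complex mat" where
  "root_mat p q k l = mat (dimN p q) (dimN p q) (\<lambda>(r,c). eig_col p q k r * eig_row p q l c)"

lemma root_mat_carrier [simp]: "root_mat p q k l \<in> carrier_mat (dimN p q) (dimN p q)"
  by (simp add: root_mat_def)

lemma root_mat_dims [simp]: "dim_row (root_mat p q k l) = dimN p q" "dim_col (root_mat p q k l) = dimN p q"
  by (simp_all add: root_mat_def)

lemma root_mat_entry:
  "r < dimN p q \<Longrightarrow> c < dimN p q \<Longrightarrow> root_mat p q k l $$ (r,c) = eig_col p q k r * eig_row p q l c"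
  by (simp add: root_mat_def)

lemma root_mat_rootsp:
  assumes k: "k < dimN p q" and l: "l < dimN p q"
  shows "root_mat p q k l \<in> rootsp p q (\<lambda>H. wt p q k H - wt p q l H)"
  unfolding rootsp_def
proof (intro CollectI conjI ballI root_mat_carrier)
  fix H assume H: "H \<in> cartan p q"
  have Hc: "H \<in> carrier_mat (dimN p q) (dimN p q)"
    by (rule cartan_carrier[OF H])
  show "H * root_mat p q k l - root_mat p q k l * H = (wt p q k H - wt p q l H) \<cdot>\<^sub>m root_mat p q k l"
  proof (rule eq_matI)
    fix i j assume "i < dim_row ((wt p q k H - wt p q l H) \<cdot>\<^sub>m root_mat p q k l)"
      "j < dim_col ((wt p q k H - wt p q l H) \<cdot>\<^sub>m root_mat p q k l)"
    then have i: "i < dimN p q" and j: "j < dimN p q" by (auto simp: root_mat_def)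
    have "(H * root_mat p q k l) $$ (i,j) = (\<Sum>m<dimN p q. H $$ (i,m) * eig_col p q k m) * eig_row p q l j"
      unfolding mult_mat_entry[OF Hc root_mat_carrier i j]
      using j by (auto simp: root_mat_entry sum_distrib_right mult.assoc intro!: sum.cong)
    also have "\<dots> = wt p q k H * eig_col p q k i * eig_row p q l j"
      by (simp add: cartan_mult_eig_col[OF H k i])
    finally have left: "(H * root_mat p q k l) $$ (i,j) = wt p q k H * eig_col p q k i * eig_row p q l j" .
    have "(root_mat p q k l * H) $$ (i,j) = eig_col p q k i * (\<Sum>m<dimN p q. eig_row p q l m * H $$ (m,j))"
      unfolding mult_mat_entry[OF root_mat_carrier Hc i j]
      using i by (auto simp: root_mat_entry sum_distrib_left mult.assoc intro!: sum.cong)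
    also have "\<dots> = eig_col p q k i * (wt p q l H * eig_row p q l j)"
      by (simp add: eig_row_mult_cartan[OF H l j])
    finally have right: "(root_mat p q k l * H) $$ (i,j) = eig_col p q k i * (wt p q l H * eig_row p q l j)" .
    show "(H * root_mat p q k l - root_mat p q k l * H) $$ (i,j) =
        ((wt p q k H - wt p q l H) \<cdot>\<^sub>m root_mat p q k l) $$ (i,j)"
      using i j Hc left right by (simp add: root_mat_entry algebra_simps)
  qed (use Hc in auto)
qed

lemma root_mat_neg_root:
  assumes "l < k" "k < dimN p q"
  shows "neg_root_vec p q (root_mat p q k l)"
  unfolding neg_root_vec_def
  using assms root_mat_rootsp[of k p q l] by (intro exI[of _ k] exI[of _ l]) simp

lemma root_mat_pos_root:
  assumes "k < l" "l < dimN p q"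
  shows "pos_root_vec p q (root_mat p q k l)"
  unfolding pos_root_vec_def
  using assms root_mat_rootsp[of k p q l] by (intro exI[of _ k] exI[of _ l]) simp

lemma root_mat_diag_cartan:
  assumes k: "k < dimN p q"
  shows "root_mat p q k k \<in> cartan p q"
proof -
  let ?f = "blk_fst p q k"
  define d where "d b = (if b = ?f then 1/2 else 0 :: complex)" for b
  define s where "s b = (if b = ?f then blk_sign p q k / 2 else 0)" for b
  have "root_mat p q k k = mat (dimN p q) (dimN p q) (\<lambda>(r,c). cartan_entry p q d s r c)"
  proof (rule eq_matI)
    fix r c assume "r < dim_row (mat (dimN p q) (dimN p q) (\<lambda>(r,c). cartan_entry p q d s r c))"
      "c < dim_col (mat (dimN p q) (dimN p q) (\<lambda>(r,c). cartan_entry p q d s r c))"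
    then have r: "r < dimN p q" and c: "c < dimN p q" by auto
    note blk = blk_facts[OF k] and base_r = pair_base_eq_blk_fst_iff[OF k r]
      and base_c = pair_base_eq_blk_fst_iff[OF k c]
    have "eig_col p q k r * eig_row p q k c = cartan_entry p q d s r c"
    proof (cases "r \<in> {?f, blk_snd p q k} \<and> c \<in> {?f, blk_snd p q k}")
      case True
      from blk_sign_cases[of p q k] show ?thesis
      proof
        assume "blk_sign p q k = 1"
        with True blk(3-5) show ?thesis
          by (elim conjE insertE) (simp_all add: cartan_entry_def eig_col_def eig_row_def d_def s_def)
      next
        assume "blk_sign p q k = -1"
        with True blk(3-5) show ?thesis
          by (elim conjE insertE) (simp_all add: cartan_entry_def eig_col_def eig_row_def d_def s_def)
      qed
    next
      case False
      then have "eig_col p q k r * eig_row p q k c = 0"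
        by (auto simp: eig_col_def eig_row_def)
      moreover have "pair_base p q r \<noteq> ?f \<or> pair_base p q r \<noteq> pair_base p q c"
        using False base_r base_c by auto
      then have "cartan_entry p q d s r c = 0"
        by (auto simp: cartan_entry_def d_def s_def)
      ultimately show ?thesis by simp
    qed
    then show "root_mat p q k k $$ (r,c) = mat (dimN p q) (dimN p q) (\<lambda>(r,c). cartan_entry p q d s r c) $$ (r,c)"
      using r c by (simp add: root_mat_entry)
  qed auto
  then show ?thesis
    using cartan_entry_mat_in_cartan by metis
qed

definition homogeneous_mat :: "nat \<Rightarrow> nat \<Rightarrow> complex mat \<Rightarrow> bool" where
  "homogeneous_mat p q X = (\<exists>a. hom_mat p q a X)"

lemma homogeneous_mat_iff: "homogeneous_mat p q X \<longleftrightarrow> even_mat p q X \<or> odd_mat p q X"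
  unfolding homogeneous_mat_def hom_mat_def by (metis (full_types))

lemma homogeneous_mat_carrier: "homogeneous_mat p q X \<Longrightarrow> X \<in> carrier_mat (dimN p q) (dimN p q)"
  by (auto simp: homogeneous_mat_iff even_mat_def odd_mat_def)

lemma hom_mat_add: "hom_mat p q a X \<Longrightarrow> hom_mat p q a Y \<Longrightarrow> hom_mat p q a (X + Y)"
  by (auto simp: hom_mat_def even_mat_def odd_mat_def)

lemma even_odd_parts:
  "even_mat p q (even_part p q X)" "odd_mat p q (odd_part p q X)"
  "X \<in> carrier_mat (dimN p q) (dimN p q) \<Longrightarrow> X = even_part p q X + odd_part p q X"
  "even_mat p q X \<Longrightarrow> even_part p q X = X \<and> odd_part p q X = 0\<^sub>m (dimN p q) (dimN p q)"
  "odd_mat p q X \<Longrightarrow> even_part p q X = 0\<^sub>m (dimN p q) (dimN p q) \<and> odd_part p q X = X"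
  by (auto simp: even_mat_def odd_mat_def even_part_def odd_part_def intro!: eq_matI)

lemma homogeneous_even_odd_parts:
  "homogeneous_mat p q (even_part p q X)" "homogeneous_mat p q (odd_part p q X)"
  using even_odd_parts(1,2) by (auto simp: homogeneous_mat_iff)

lemma root_mat_hom_mat:
  assumes k: "k < dimN p q" and l: "l < dimN p q"
  shows "hom_mat p q (idx_odd p (blk_fst p q k) \<noteq> idx_odd p (blk_fst p q l)) (root_mat p q k l)"
proof -
  have col: "idx_odd p r = idx_odd p (blk_fst p q k)" if "eig_col p q k r \<noteq> 0" for r
    using that blk_facts(6)[OF k] by (auto simp: eig_col_def split: if_splits)
  have row: "idx_odd p c = idx_odd p (blk_fst p q l)" if "eig_row p q l c \<noteq> 0" for c
    using that blk_facts(6)[OF l] by (auto simp: eig_row_def split: if_splits)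
  show ?thesis
    unfolding hom_mat_def even_mat_def odd_mat_def using col row by (auto simp: root_mat_entry)
qed

lemma root_mat_homogeneous: "k < dimN p q \<Longrightarrow> l < dimN p q \<Longrightarrow> homogeneous_mat p q (root_mat p q k l)"
  unfolding homogeneous_mat_def using root_mat_hom_mat by blast

lemma Jmat_entry:
  "r < dimN p q \<Longrightarrow> c < dimN p q \<Longrightarrow>
    Jmat p q $$ (r,c) = (if r = c then if pair_base p q r = r then 1/2 else -1/2 else 0)"
  by (auto simp: Jmat_def pair_base_def dimN_def)

lemma kset_if_block_diagonal:
  assumes M: "M \<in> carrier_mat (dimN p q) (dimN p q)"
    and block: "\<And>r c. r < dimN p q \<Longrightarrow> c < dimN p q \<Longrightarrow>
      (pair_base p q r = r) \<noteq> (pair_base p q c = c) \<Longrightarrow> M $$ (r,c) = 0"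
  shows "M \<in> kset p q"
  unfolding kset_def
proof (intro CollectI conjI M eq_matI)
  let ?j = "\<lambda>r. if pair_base p q r = r then 1/2 else -1/2 :: complex"
  have J: "Jmat p q \<in> carrier_mat (dimN p q) (dimN p q)" by (simp add: Jmat_def)
  fix r c assume "r < dim_row (0\<^sub>m (dimN p q) (dimN p q) :: complex mat)"
    "c < dim_col (0\<^sub>m (dimN p q) (dimN p q) :: complex mat)"
  then have r: "r < dimN p q" and c: "c < dimN p q" by auto
  have "(Jmat p q * M) $$ (r,c) = (\<Sum>m<dimN p q. if m = r then ?j r * M $$ (m,c) else 0)"
    unfolding mult_mat_entry[OF J M r c] using r by (intro sum.cong) (auto simp: Jmat_entry)
  also have "\<dots> = ?j r * M $$ (r,c)" using r by simp
  finally have JM: "(Jmat p q * M) $$ (r,c) = ?j r * M $$ (r,c)" .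
  have "(M * Jmat p q) $$ (r,c) = (\<Sum>m<dimN p q. if m = c then M $$ (r,m) * ?j c else 0)"
    unfolding mult_mat_entry[OF M J r c] using c by (intro sum.cong) (auto simp: Jmat_entry)
  also have "\<dots> = M $$ (r,c) * ?j c" using c by simp
  finally have MJ: "(M * Jmat p q) $$ (r,c) = M $$ (r,c) * ?j c" .
  show "(Jmat p q * M - M * Jmat p q) $$ (r,c) = 0\<^sub>m (dimN p q) (dimN p q) $$ (r,c)"
    using r c J M JM MJ block[OF r c] by (cases "(pair_base p q r = r) = (pair_base p q c = c)") auto
qed (use M in \<open>auto simp: Jmat_def\<close>)

lemma eig_col_opp:
  "k < dimN p q \<Longrightarrow> r < dimN p q \<Longrightarrow>
    eig_col p q (opp_idx p q k) r = (if pair_base p q r = r then 1 else -1) * eig_col p q k r"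
  using blk_facts[of k p q] blk_opp[of k p q] by (auto simp: eig_col_def)

lemma eig_row_opp:
  "k < dimN p q \<Longrightarrow> r < dimN p q \<Longrightarrow>
    eig_row p q (opp_idx p q k) r = (if pair_base p q r = r then 1 else -1) * eig_row p q k r"
  using blk_facts[of k p q] blk_opp[of k p q] by (auto simp: eig_row_def)

lemma root_mat_opp_sum_kset:
  assumes k: "k < dimN p q" and l: "l < dimN p q"
  shows "root_mat p q k l + root_mat p q (opp_idx p q k) (opp_idx p q l) \<in> kset p q"
proof (rule kset_if_block_diagonal)
  fix r c assume r: "r < dimN p q" and c: "c < dimN p q"
    and "(pair_base p q r = r) \<noteq> (pair_base p q c = c)"
  then show "(root_mat p q k l + root_mat p q (opp_idx p q k) (opp_idx p q l)) $$ (r,c) = 0"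
    by (auto simp: root_mat_entry eig_col_opp[OF k r] eig_row_opp[OF l c])
qed simp

inductive_set mat_span :: "nat \<Rightarrow> complex mat set \<Rightarrow> complex mat set" for n S where
  zero: "0\<^sub>m n n \<in> mat_span n S"
| base: "X \<in> S \<Longrightarrow> X \<in> mat_span n S"
| add: "X \<in> mat_span n S \<Longrightarrow> Y \<in> mat_span n S \<Longrightarrow> X + Y \<in> mat_span n S"
| smult: "X \<in> mat_span n S \<Longrightarrow> c \<cdot>\<^sub>m X \<in> mat_span n S"

lemma mat_span_subset:
  assumes "S \<subseteq> mat_span n T" "X \<in> mat_span n S"
  shows "X \<in> mat_span n T"
  using assms(2) by induction (use assms(1) in \<open>auto intro: mat_span.intros\<close>)

lemma mat_span_carrier:
  assumes "S \<subseteq> carrier_mat n n" "X \<in> mat_span n S"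
  shows "X \<in> carrier_mat n n"
  using assms(2) by induction (use assms(1) in auto)

lemma carrier_in_mat_span_emat:
  assumes emat: "\<And>r c. r < n \<Longrightarrow> c < n \<Longrightarrow> emat n r c \<in> mat_span n S"
    and X: "X \<in> carrier_mat n n"
  shows "X \<in> mat_span n S"
proof -
  let ?restr = "\<lambda>P. mat n n (\<lambda>rc. if rc \<in> P then X $$ rc else 0)"
  have "?restr P \<in> mat_span n S" if "finite P" "P \<subseteq> {..<n} \<times> {..<n}" for P
    using that
  proof (induction P rule: finite_induct)
    case empty
    have "?restr {} = 0\<^sub>m n n" by (rule eq_matI) auto
    then show ?case by (simp add: mat_span.zero)
  next
    case (insert rc P)
    obtain r c where rc: "rc = (r,c)" "r < n" "c < n"
      using insert.prems by (cases rc) auto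
    have "?restr (insert rc P) = ?restr P + X $$ (r,c) \<cdot>\<^sub>m emat n r c"
    proof (rule eq_matI)
      fix i j assume "i < dim_row (?restr P + X $$ (r,c) \<cdot>\<^sub>m emat n r c)"
        "j < dim_col (?restr P + X $$ (r,c) \<cdot>\<^sub>m emat n r c)"
      then have "i < n" "j < n" by (simp_all add: emat_def)
      then show "?restr (insert rc P) $$ (i,j) = (?restr P + X $$ (r,c) \<cdot>\<^sub>m emat n r c) $$ (i,j)"
        using insert.hyps(2) rc(1) by (simp add: emat_def)
    qed (simp_all add: emat_def)
    moreover have "?restr P \<in> mat_span n S"
      using insert.IH insert.prems by simp
    ultimately show ?case
      using emat[OF rc(2,3)] by (simp add: mat_span.add mat_span.smult)
  qed
  moreover have "?restr ({..<n} \<times> {..<n}) = X"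
    using X by (intro eq_matI) auto
  ultimately show ?thesis
    by (metis finite_SigmaI finite_lessThan order_refl)
qed

lemma eig_resolution:
  assumes r: "r < dimN p q" and i: "i < dimN p q"
  shows "eig_col p q (blk_of p q r) i * eig_row p q (blk_of p q r) r
      + eig_col p q (opp_idx p q (blk_of p q r)) i * eig_row p q (opp_idx p q (blk_of p q r)) r
      = (if i = r then 1 else 0)"
    and "eig_col p q (blk_of p q r) r * eig_row p q (blk_of p q r) i
      + eig_col p q (opp_idx p q (blk_of p q r)) r * eig_row p q (opp_idx p q (blk_of p q r)) i
      = (if i = r then 1 else 0)"
proof -
  define k where "k = blk_of p q r"
  have k: "k < dimN p q" and rk: "r = blk_fst p q k \<or> r = blk_snd p q k"
    using blk_of_facts[OF r] by (auto simp: k_def)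
  note facts = rk blk_facts[OF k] blk_opp[OF k] blk_sign_cases[of p q k]
  show "eig_col p q (blk_of p q r) i * eig_row p q (blk_of p q r) r
      + eig_col p q (opp_idx p q (blk_of p q r)) i * eig_row p q (opp_idx p q (blk_of p q r)) r
      = (if i = r then 1 else 0)"
    unfolding k_def[symmetric] using facts by (auto simp: eig_col_def eig_row_def)
  show "eig_col p q (blk_of p q r) r * eig_row p q (blk_of p q r) i
      + eig_col p q (opp_idx p q (blk_of p q r)) r * eig_row p q (opp_idx p q (blk_of p q r)) i
      = (if i = r then 1 else 0)"
    unfolding k_def[symmetric] using facts by (auto simp: eig_col_def eig_row_def)
qed

lemma emat_in_span_root_mats:
  assumes r: "r < dimN p q" and c: "c < dimN p q"
  shows "emat (dimN p q) r c \<in> mat_span (dimN p q) {root_mat p q k l |k l. k < dimN p q \<and> l < dimN p q}"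
proof -
  let ?S = "{root_mat p q k l |k l. k < dimN p q \<and> l < dimN p q}"
  define k1 where "k1 = blk_of p q r"
  define k2 where "k2 = opp_idx p q (blk_of p q r)"
  define l1 where "l1 = blk_of p q c"
  define l2 where "l2 = opp_idx p q (blk_of p q c)"
  have ks: "k1 < dimN p q" "k2 < dimN p q" "l1 < dimN p q" "l2 < dimN p q"
    using blk_of_facts(1)[OF r] blk_of_facts(1)[OF c] blk_opp(1)
    by (auto simp: k1_def k2_def l1_def l2_def)
  have gen: "x \<cdot>\<^sub>m root_mat p q k l \<in> mat_span (dimN p q) ?S"
    if "k < dimN p q" "l < dimN p q" for x k l
    using that by (intro mat_span.smult mat_span.base) blast
  \<comment> \<open>\<open>E\<^sub>r\<^sub>c\<close> sandwiched between the resolutions of the identity on the blocks of \<open>r\<close> and \<open>c\<close>\<close>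
  define E where "E =
      (eig_row p q k1 r * eig_col p q l1 c) \<cdot>\<^sub>m root_mat p q k1 l1
    + (eig_row p q k1 r * eig_col p q l2 c) \<cdot>\<^sub>m root_mat p q k1 l2
    + (eig_row p q k2 r * eig_col p q l1 c) \<cdot>\<^sub>m root_mat p q k2 l1
    + (eig_row p q k2 r * eig_col p q l2 c) \<cdot>\<^sub>m root_mat p q k2 l2"
  have "E \<in> mat_span (dimN p q) ?S"
    unfolding E_def using ks by (intro mat_span.add gen)
  moreover have "emat (dimN p q) r c = E"
  proof (rule eq_matI)
    fix i j assume "i < dim_row E" "j < dim_col E"
    then have i: "i < dimN p q" and j: "j < dimN p q" by (auto simp: E_def)
    have "E $$ (i,j) =
        (eig_col p q k1 i * eig_row p q k1 r + eig_col p q k2 i * eig_row p q k2 r) *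
        (eig_col p q l1 c * eig_row p q l1 j + eig_col p q l2 c * eig_row p q l2 j)"
      using i j by (simp add: E_def root_mat_entry) (simp add: algebra_simps)
    also have "\<dots> = (if i = r then 1 else 0) * (if j = c then 1 else 0)"
      unfolding k1_def k2_def l1_def l2_def eig_resolution[OF r i] eig_resolution[OF c j] ..
    finally show "emat (dimN p q) r c $$ (i,j) = E $$ (i,j)"
      using i j by (simp add: emat_def)
  qed (auto simp: E_def emat_def)
  ultimately show ?thesis by simp
qed

lemma carrier_in_span_root_mats:
  "X \<in> carrier_mat (dimN p q) (dimN p q) \<Longrightarrow>
    X \<in> mat_span (dimN p q) {root_mat p q k l |k l. k < dimN p q \<and> l < dimN p q}"
  by (rule carrier_in_mat_span_emat[OF emat_in_span_root_mats])

definition b_minus_hom :: "nat \<Rightarrow> nat \<Rightarrow> complex mat set" where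
  "b_minus_hom p q = {X. (X \<in> cartan p q \<or> neg_root_vec p q X) \<and> homogeneous_mat p q X}"

definition k_hom :: "nat \<Rightarrow> nat \<Rightarrow> complex mat set" where
  "k_hom p q = {X \<in> kset p q. homogeneous_mat p q X}"

definition n_minus_hom :: "nat \<Rightarrow> nat \<Rightarrow> complex mat set" where
  "n_minus_hom p q = {X. neg_root_vec p q X \<and> homogeneous_mat p q X}"

definition b_hom :: "nat \<Rightarrow> nat \<Rightarrow> complex mat set" where
  "b_hom p q = {X. (X \<in> cartan p q \<or> pos_root_vec p q X) \<and> homogeneous_mat p q X}"

lemma carrier_in_span_b_minus_k:
  assumes "X \<in> carrier_mat (dimN p q) (dimN p q)"
  shows "X \<in> mat_span (dimN p q) (b_minus_hom p q \<union> k_hom p q)"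
proof (rule mat_span_subset[OF _ carrier_in_span_root_mats[OF assms]], safe)
  fix k l assume k: "k < dimN p q" and l: "l < dimN p q"
  let ?S = "mat_span (dimN p q) (b_minus_hom p q \<union> k_hom p q)"
  consider "l < k" | "k = l" | "k < l" by linarith
  then show "root_mat p q k l \<in> ?S"
  proof cases
    case 1
    then show ?thesis using root_mat_neg_root[OF 1 k] root_mat_homogeneous[OF k l]
      by (auto simp: b_minus_hom_def intro: mat_span.base)
  next
    case 2
    then show ?thesis using root_mat_diag_cartan[OF k] root_mat_homogeneous[OF k l]
      by (auto simp: b_minus_hom_def intro: mat_span.base)
  next
    case 3
    let ?k = "opp_idx p q k" and ?l = "opp_idx p q l"
    have k': "?k < dimN p q" and l': "?l < dimN p q" and "?l < ?k"
      using k l 3 by (auto simp: opp_idx_def)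
    have "root_mat p q ?k ?l \<in> ?S"
      using root_mat_neg_root[OF \<open>?l < ?k\<close> k'] root_mat_homogeneous[OF k' l']
      by (auto simp: b_minus_hom_def intro: mat_span.base)
    moreover have "root_mat p q k l + root_mat p q ?k ?l \<in> ?S"
    proof -
      have "hom_mat p q (idx_odd p (blk_fst p q k) \<noteq> idx_odd p (blk_fst p q l))
          (root_mat p q k l + root_mat p q ?k ?l)"
        using root_mat_hom_mat[OF k l] root_mat_hom_mat[OF k' l'] blk_opp(2)[OF k] blk_opp(2)[OF l]
        by (auto intro: hom_mat_add)
      then show ?thesis
        using root_mat_opp_sum_kset[OF k l]
        by (auto simp: k_hom_def homogeneous_mat_def intro: mat_span.base)
    qed
    moreover have "root_mat p q k l = (root_mat p q k l + root_mat p q ?k ?l) + (-1) \<cdot>\<^sub>m root_mat p q ?k ?l"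
      by (rule eq_matI) auto
    ultimately show ?thesis
      by (metis mat_span.add mat_span.smult)
  qed
qed

lemma carrier_in_span_n_minus_b:
  assumes "X \<in> carrier_mat (dimN p q) (dimN p q)"
  shows "X \<in> mat_span (dimN p q) (n_minus_hom p q \<union> b_hom p q)"
proof (rule mat_span_subset[OF _ carrier_in_span_root_mats[OF assms]], safe)
  fix k l assume k: "k < dimN p q" and l: "l < dimN p q"
  consider "l < k" | "k = l" | "k < l" by linarith
  then show "root_mat p q k l \<in> mat_span (dimN p q) (n_minus_hom p q \<union> b_hom p q)"
    using root_mat_neg_root[OF _ k] root_mat_diag_cartan[OF k] root_mat_pos_root[OF _ l]
      root_mat_homogeneous[OF k l]
    by cases (auto simp: n_minus_hom_def b_hom_def intro: mat_span.base)
qed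

section \<open>Graded modules\<close>

locale gmod =
  fixes p q :: nat and sc :: "complex \<Rightarrow> 'v::ab_group_add \<Rightarrow> 'v" and V0 V1 :: "'v set"
    and act :: "complex mat \<Rightarrow> 'v \<Rightarrow> 'v"
  assumes gmodule: "gmodule p q sc V0 V1 act"
begin

sublocale vector_space sc
  using gmodule by (simp add: gmodule_def)

abbreviation car :: "complex mat set" where
  "car \<equiv> carrier_mat (dimN p q) (dimN p q)"

lemma V0_subspace: "subspace V0" and V1_subspace: "subspace V1"
  using gmodule by (simp_all add: gmodule_def is_subsp_def subspace_def)

lemma V0_inter_V1: "V0 \<inter> V1 = {0}"
  and V0_plus_V1: "\<exists>a\<in>V0. \<exists>b\<in>V1. v = a + b"
  using gmodule by (simp_all add: gmodule_def)

lemma act_add: "X \<in> car \<Longrightarrow> act X (v + w) = act X v + act X w"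
  and act_scale: "X \<in> car \<Longrightarrow> act X (sc c v) = sc c (act X v)"
  and act_mat_add: "X \<in> car \<Longrightarrow> Y \<in> car \<Longrightarrow> act (X + Y) v = act X v + act Y v"
  and act_mat_smult: "X \<in> car \<Longrightarrow> act (c \<cdot>\<^sub>m X) v = sc c (act X v)"
  using gmodule by (simp_all add: gmodule_def)

lemma even_act: "even_mat p q X \<Longrightarrow> act X ` V0 \<subseteq> V0 \<and> act X ` V1 \<subseteq> V1"
  and odd_act: "odd_mat p q X \<Longrightarrow> act X ` V0 \<subseteq> V1 \<and> act X ` V1 \<subseteq> V0"
  using gmodule by (simp_all add: gmodule_def)

lemma act_supercommutator:
  assumes "hom_mat p q a X" "hom_mat p q b Y"
  defines "\<sigma> \<equiv> if a \<and> b then -1 else 1"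
  shows "act (X * Y - \<sigma> \<cdot>\<^sub>m (Y * X)) v = act X (act Y v) - sc \<sigma> (act Y (act X v))"
proof -
  have "\<forall>a b X Y v. hom_mat p q a X \<longrightarrow> hom_mat p q b Y \<longrightarrow>
        (let \<sigma> = (if a \<and> b then -1 else 1 :: complex) in
         act (X * Y - \<sigma> \<cdot>\<^sub>m (Y * X)) v = act X (act Y v) - sc \<sigma> (act Y (act X v)))"
    using gmodule unfolding gmodule_def by (elim conjE) assumption
  then show ?thesis
    using assms(1,2) unfolding \<sigma>_def Let_def by blast
qed

lemma act_swap:
  assumes "homogeneous_mat p q X" "homogeneous_mat p q Y"
  obtains \<sigma> where "act X (act Y v) = act (X * Y - \<sigma> \<cdot>\<^sub>m (Y * X)) v + sc \<sigma> (act Y (act X v))"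
proof -
  obtain a b where "hom_mat p q a X" "hom_mat p q b Y"
    using assms unfolding homogeneous_mat_def by blast
  from act_supercommutator[OF this, of v] show thesis
    by (intro that[of "if a \<and> b then -1 else 1"]) (simp add: algebra_simps)
qed

lemma act_diff: "X \<in> car \<Longrightarrow> act X (v - w) = act X v - act X w"
  using act_add[of X "v - w" w] by (simp add: algebra_simps)

lemma act_zero_mat: "act (0\<^sub>m (dimN p q) (dimN p q)) v = 0"
  using act_mat_smult[of "0\<^sub>m (dimN p q) (dimN p q)" 0 v] by simp

lemma homogeneous_act:
  "homogeneous_mat p q X \<Longrightarrow> v \<in> V0 \<union> V1 \<Longrightarrow> act X v \<in> V0 \<union> V1"
  unfolding homogeneous_mat_iff by (auto dest!: even_act odd_act)

lemma decomposition_unique: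
  assumes "a0 \<in> V0" "b0 \<in> V0" "a1 \<in> V1" "b1 \<in> V1" "a0 + a1 = b0 + b1"
  shows "a0 = b0" "a1 = b1"
proof -
  have "a0 - b0 = b1 - a1" using assms(5) by (simp add: algebra_simps)
  moreover have "a0 - b0 \<in> V0" "b1 - a1 \<in> V1"
    using assms V0_subspace V1_subspace by (simp_all add: subspace_diff)
  ultimately have "a0 - b0 = 0" using V0_inter_V1 by (metis IntI singletonD)
  then show "a0 = b0" "a1 = b1" using assms(5) by simp_all
qed

lemma proj0_eqI: "a \<in> V0 \<Longrightarrow> v - a \<in> V1 \<Longrightarrow> proj0 V0 V1 v = a"
  unfolding proj0_def
proof (rule the_equality)
  fix a' assume "a \<in> V0" "v - a \<in> V1" "a' \<in> V0 \<and> v - a' \<in> V1"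
  then show "a' = a"
    using decomposition_unique(1)[of a' a "v - a'" "v - a"] by simp
qed simp

lemma proj0_mem: "proj0 V0 V1 v \<in> V0" "v - proj0 V0 V1 v \<in> V1"
proof -
  obtain a b where "a \<in> V0" "b \<in> V1" "v = a + b" using V0_plus_V1 by blast
  then show "proj0 V0 V1 v \<in> V0" "v - proj0 V0 V1 v \<in> V1"
    using proj0_eqI[of a v] by auto
qed

lemma proj0_V0: "v \<in> V0 \<Longrightarrow> proj0 V0 V1 v = v"
  using proj0_eqI[of v v] subspace_0[OF V1_subspace] by simp

lemma proj0_V1: "v \<in> V1 \<Longrightarrow> proj0 V0 V1 v = 0"
  using proj0_eqI[of 0 v] subspace_0[OF V0_subspace] by simp

lemma proj0_add: "proj0 V0 V1 (x + y) = proj0 V0 V1 x + proj0 V0 V1 y"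
proof (rule proj0_eqI)
  show "proj0 V0 V1 x + proj0 V0 V1 y \<in> V0"
    using proj0_mem V0_subspace by (simp add: subspace_add)
  have "x + y - (proj0 V0 V1 x + proj0 V0 V1 y) = (x - proj0 V0 V1 x) + (y - proj0 V0 V1 y)"
    by (simp add: algebra_simps)
  also have "\<dots> \<in> V1"
    by (intro subspace_add[OF V1_subspace] proj0_mem)
  finally show "x + y - (proj0 V0 V1 x + proj0 V0 V1 y) \<in> V1" .
qed

lemma proj0_scale: "proj0 V0 V1 (sc c x) = sc c (proj0 V0 V1 x)"
proof (rule proj0_eqI)
  show "sc c (proj0 V0 V1 x) \<in> V0"
    using proj0_mem V0_subspace by (simp add: subspace_scale)
  show "sc c x - sc c (proj0 V0 V1 x) \<in> V1"
    using proj0_mem V1_subspace by (simp add: subspace_scale flip: scale_right_diff_distrib)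
qed

lemma even_act_proj0: "even_mat p q X \<Longrightarrow> act X (proj0 V0 V1 v) = proj0 V0 V1 (act X v)"
proof -
  assume X: "even_mat p q X"
  then have "X \<in> car" by (simp add: even_mat_def)
  show ?thesis
  proof (rule proj0_eqI[symmetric])
    show "act X (proj0 V0 V1 v) \<in> V0" using even_act[OF X] proj0_mem by blast
    show "act X v - act X (proj0 V0 V1 v) \<in> V1"
      using even_act[OF X] proj0_mem act_diff[OF \<open>X \<in> car\<close>, symmetric] by (simp add: image_subset_iff)
  qed
qed

lemma odd_act_proj0: "odd_mat p q X \<Longrightarrow> act X (proj0 V0 V1 v) = act X v - proj0 V0 V1 (act X v)"
proof -
  assume X: "odd_mat p q X"
  then have Xc: "X \<in> car" by (simp add: odd_mat_def)
  have "proj0 V0 V1 (act X v) = act X (v - proj0 V0 V1 v)"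
  proof (rule proj0_eqI)
    show "act X (v - proj0 V0 V1 v) \<in> V0" using odd_act[OF X] proj0_mem by blast
    show "act X v - act X (v - proj0 V0 V1 v) \<in> V1"
      using odd_act[OF X] proj0_mem act_diff[OF Xc] by (simp add: image_subset_iff)
  qed
  then show ?thesis using act_diff[OF Xc] by simp
qed

lemma proj0_zero: "proj0 V0 V1 0 = 0"
  using proj0_V0 subspace_0[OF V0_subspace] by blast

lemma act_even_odd_parts: "X \<in> car \<Longrightarrow> act X v = act (even_part p q X) v + act (odd_part p q X) v"
  using act_mat_add[of "even_part p q X" "odd_part p q X" v] even_odd_parts(3)[of X]
  by (simp add: even_part_def odd_part_def)

lemma span_map_subset:
  assumes add: "\<And>x y. L (x + y) = L x + L y" and scale: "\<And>c x. L (sc c x) = sc c (L x)"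
    and gen: "\<And>w. w \<in> S \<Longrightarrow> L w \<in> span T" and x: "x \<in> span S"
  shows "L x \<in> span T"
proof -
  have "L 0 = 0" using add[of 0 0] by simp
  then have "subspace {x. L x \<in> span T}"
    by (auto simp: subspace_def add scale span_add span_scale span_zero)
  then show ?thesis using span_induct[OF x, of "\<lambda>x. L x \<in> span T"] gen by blast
qed

lemma functional_zero_on_span:
  assumes "is_lin_fun sc f" and "\<And>w. w \<in> S \<Longrightarrow> f w = 0" and "x \<in> span S"
  shows "f x = 0"
proof -
  have add: "f (x + y) = f x + f y" and scale: "f (sc c x) = c * f x" for x y c
    using assms(1) by (simp_all add: is_lin_fun_def)
  have "f 0 = 0" using add[of 0 0] by simp
  then have "subspace {x. f x = 0}"
    by (auto simp: subspace_def add scale)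
  then show ?thesis using span_induct[OF assms(3), of "\<lambda>x. f x = 0"] assms(2) by blast
qed


section \<open>A PBW-type spanning lemma\<close>

definition word_vectors :: "complex mat set \<Rightarrow> 'v \<Rightarrow> 'v set" where
  "word_vectors A v = {foldr act bs v |bs. set bs \<subseteq> A}"

definition word_vectors_upto :: "complex mat set \<Rightarrow> 'v \<Rightarrow> nat \<Rightarrow> 'v set" where
  "word_vectors_upto A v n = {foldr act bs v |bs. set bs \<subseteq> A \<and> length bs \<le> n}"

lemma word_vectors_base: "v \<in> word_vectors A v"
  unfolding word_vectors_def by (auto intro!: exI[of _ "[]"])

lemma word_vectors_mono: "A \<subseteq> B \<Longrightarrow> word_vectors A v \<subseteq> word_vectors B v"
  unfolding word_vectors_def by blast

lemma word_vectors_upto_base: "v \<in> word_vectors_upto A v n"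
  unfolding word_vectors_upto_def by (auto intro!: exI[of _ "[]"])

lemma word_vectors_upto_act:
  assumes "X \<in> A" "w \<in> word_vectors_upto A v n"
  shows "act X w \<in> word_vectors_upto A v (Suc n)"
proof -
  obtain bs where "w = foldr act bs v" "set bs \<subseteq> A" "length bs \<le> n"
    using assms(2) unfolding word_vectors_upto_def by blast
  then show ?thesis
    using assms(1) unfolding word_vectors_upto_def by (auto intro!: exI[of _ "X # bs"])
qed

lemma word_vectors_upto_mono:
  "m \<le> n \<Longrightarrow> word_vectors_upto A v m \<subseteq> word_vectors_upto A v n"
  unfolding word_vectors_upto_def by fastforce

lemma word_vectors_upto_subset: "word_vectors_upto A v n \<subseteq> word_vectors A v"
  unfolding word_vectors_upto_def word_vectors_def by blast

lemma homogeneous_word_vectors: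
  assumes "A \<subseteq> Collect (homogeneous_mat p q)" "v \<in> V0 \<union> V1" "w \<in> word_vectors A v"
  shows "w \<in> V0 \<union> V1"
proof -
  obtain bs where w: "w = foldr act bs v" "set bs \<subseteq> A"
    using assms(3) unfolding word_vectors_def by blast
  have "foldr act bs v \<in> V0 \<union> V1" using w(2)
  proof (induction bs)
    case Nil
    then show ?case using assms(2) by simp
  next
    case (Cons X bs)
    then have "homogeneous_mat p q X" using assms(1) by auto
    then show ?case using Cons homogeneous_act by simp
  qed
  then show ?thesis using w(1) by simp
qed

lemma foldr_act_add: "set bs \<subseteq> car \<Longrightarrow> foldr act bs (x + y) = foldr act bs x + foldr act bs y"
  by (induction bs) (auto simp: act_add)

lemma foldr_act_scale: "set bs \<subseteq> car \<Longrightarrow> foldr act bs (sc c x) = sc c (foldr act bs x)"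
  by (induction bs) (auto simp: act_scale)

lemma foldr_act_proj0:
  assumes "set bs \<subseteq> Collect (homogeneous_mat p q)"
  shows "foldr act bs (proj0 V0 V1 v) = proj0 V0 V1 (foldr act bs v) \<or>
    foldr act bs (proj0 V0 V1 v) = foldr act bs v - proj0 V0 V1 (foldr act bs v)"
  using assms
proof (induction bs)
  case (Cons X bs)
  let ?z = "foldr act bs v"
  have X: "homogeneous_mat p q X" and Xc: "X \<in> car"
    using Cons.prems homogeneous_mat_carrier by auto
  then consider "even_mat p q X" | "odd_mat p q X" by (auto simp: homogeneous_mat_iff)
  then show ?case
    using Cons X act_diff[OF Xc, of ?z] even_act_proj0[of X ?z] odd_act_proj0[of X ?z]
    by cases auto
qed simp

lemma act_span_subset:
  assumes "X \<in> car" "\<And>w. w \<in> S \<Longrightarrow> act X w \<in> span T" "x \<in> span S"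
  shows "act X x \<in> span T"
  using span_map_subset[of "act X"] act_add act_scale assms by blast

lemma act_mat_span:
  assumes S: "S \<subseteq> car" and U: "subspace U" and X: "X \<in> mat_span (dimN p q) S"
    and gen: "\<And>Y. Y \<in> S \<Longrightarrow> act Y v \<in> U"
  shows "act X v \<in> U"
  using X
proof induction
  case zero
  then show ?case using U by (simp add: act_zero_mat subspace_0)
next
  case (base Y)
  then show ?case by (rule gen)
next
  case (add Y Z)
  then show ?case
    using mat_span_carrier[OF S] U by (simp add: act_mat_add subspace_add)
next
  case (smult Y c)
  then show ?case
    using mat_span_carrier[OF S] U by (simp add: act_mat_smult subspace_scale)
qed

lemma act_word_vectors_upto:
  assumes hom: "A \<union> C \<subseteq> Collect (homogeneous_mat p q)"
    and spans: "\<And>X. X \<in> car \<Longrightarrow> X \<in> mat_span (dimN p q) (A \<union> C)"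
    and eigen: "\<And>Y. Y \<in> C \<Longrightarrow> \<exists>\<mu>. act Y v = sc \<mu> v"
    and "set as \<subseteq> A" "X \<in> car"
  shows "act X (foldr act as v) \<in> span (word_vectors_upto A v (Suc (length as)))"
proof -
  have AC: "A \<union> C \<subseteq> car" using hom homogeneous_mat_carrier by blast
  from assms(4,5) show ?thesis
  proof (induction as arbitrary: X)
    case Nil
    show ?case
    proof (rule act_mat_span[OF AC subspace_span spans[OF Nil(2)]])
      fix Y assume "Y \<in> A \<union> C"
      then show "act Y (foldr act [] v) \<in> span (word_vectors_upto A v (Suc (length [])))"
      proof
        assume "Y \<in> A"
        then show ?thesis
          using word_vectors_upto_act[OF _ word_vectors_upto_base] by (simp add: span_base)
      next
        assume "Y \<in> C"
        then obtain \<mu> where "act Y v = sc \<mu> v" using eigen by blast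
        then show ?thesis
          using word_vectors_upto_base by (simp add: span_base span_scale)
      qed
    qed
  next
    case (Cons a as)
    have a: "a \<in> A" "a \<in> car" and as: "set as \<subseteq> A" using Cons.prems AC by auto
    let ?w = "foldr act as v" and ?U = "span (word_vectors_upto A v (Suc (length (a # as))))"
    have IH: "act Z ?w \<in> ?U" if "Z \<in> car" for Z
      using Cons.IH[OF as that]
        span_mono[OF word_vectors_upto_mono[of "Suc (length as)" "Suc (length (a # as))"]] by auto
    have act_a: "act a (act Z ?w) \<in> ?U" if "Z \<in> car" for Z
      by (rule act_span_subset[OF a(2) _ Cons.IH[OF as that]])
        (use word_vectors_upto_act[OF a(1)] in \<open>simp add: span_base\<close>)
    show ?case
    proof (rule act_mat_span[OF AC subspace_span spans[OF Cons.prems(2)]])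
      fix Y assume "Y \<in> A \<union> C"
      then show "act Y (foldr act (a # as) v) \<in> ?U"
      proof
        assume "Y \<in> A"
        have "foldr act (a # as) v \<in> word_vectors_upto A v (Suc (length as))"
          using a(1) as unfolding word_vectors_upto_def by (auto intro!: exI[of _ "a # as"])
        then show ?thesis
          using word_vectors_upto_act[OF \<open>Y \<in> A\<close>] by (simp add: span_base)
      next
        assume "Y \<in> C"
        \<comment> \<open>commuting \<open>Y\<close> past \<open>a\<close> leaves a supercommutator, which acts on the shorter word\<close>
        then have "Y \<in> car" "homogeneous_mat p q Y" "homogeneous_mat p q a"
          using AC hom a(1) by auto
        then obtain \<sigma> where "act Y (act a ?w) = act (Y * a - \<sigma> \<cdot>\<^sub>m (a * Y)) ?w + sc \<sigma> (act a (act Y ?w))"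
          using act_swap by blast
        moreover have "Y * a - \<sigma> \<cdot>\<^sub>m (a * Y) \<in> car" using \<open>Y \<in> car\<close> a(2) by auto
        ultimately show ?thesis
          using IH act_a[OF \<open>Y \<in> car\<close>] by (simp add: span_add span_scale)
      qed
    qed
  qed
qed

theorem word_vectors_in_span:
  assumes hom: "A \<union> C \<subseteq> Collect (homogeneous_mat p q)"
    and spans: "\<And>X. X \<in> car \<Longrightarrow> X \<in> mat_span (dimN p q) (A \<union> C)"
    and eigen: "\<And>Y. Y \<in> C \<Longrightarrow> \<exists>\<mu>. act Y v = sc \<mu> v"
  shows "word_vectors car v \<subseteq> span (word_vectors A v)"
proof
  fix w assume "w \<in> word_vectors car v"
  then obtain bs where w: "w = foldr act bs v" "set bs \<subseteq> car"
    unfolding word_vectors_def by blast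
  show "w \<in> span (word_vectors A v)" unfolding w(1) using w(2)
  proof (induction bs)
    case Nil
    then show ?case by (simp add: span_base word_vectors_base)
  next
    case (Cons X bs)
    have X: "X \<in> car" using Cons.prems by simp
    have closed: "act X u \<in> span (word_vectors A v)" if u_word: "u \<in> word_vectors A v" for u
    proof -
      obtain as where u: "u = foldr act as v" "set as \<subseteq> A"
        using u_word unfolding word_vectors_def by blast
      then have "act X u \<in> span (word_vectors_upto A v (Suc (length as)))"
        using act_word_vectors_upto[OF hom spans eigen u(2) X] by simp
      then show ?thesis
        using span_mono[OF word_vectors_upto_subset] by blast
    qed
    have "foldr act bs v \<in> span (word_vectors A v)"
      using Cons by simp
    then show ?case
      using act_span_subset[OF X closed] by simp
  qed
qed


section \<open>Contragredient action, highest weight vectors and irreducibility\<close>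

lemma dual_act_even:
  assumes "even_mat p q X"
  shows "dual_act p q V0 V1 act X f v = - f (act X v)"
  using even_odd_parts(4)[OF assms] by (simp add: dual_act_def act_zero_mat proj0_zero)

lemma dual_act_odd:
  assumes "odd_mat p q X" "f 0 = 0"
  shows "v \<in> V0 \<Longrightarrow> dual_act p q V0 V1 act X f v = f (act X v)"
    and "v \<in> V1 \<Longrightarrow> dual_act p q V0 V1 act X f v = - f (act X v)"
  using even_odd_parts(5)[OF assms(1)] odd_act[OF assms(1)] assms(2)
  by (auto simp: dual_act_def act_zero_mat proj0_V0 proj0_V1)

lemma act_annihilated_by_dual_act:
  assumes f: "is_lin_fun sc f" and X: "homogeneous_mat p q X"
    and dual: "dual_act p q V0 V1 act X f = (\<lambda>v. 0)"
  shows "f (act X v) = 0"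
proof -
  have f0: "f 0 = 0" using f unfolding is_lin_fun_def by (metis add_0 add_cancel_right_left)
  have "f (act X u) = 0" if "u \<in> V0 \<union> V1" for u
    using X that dual_act_even[of X f u] dual_act_odd[of X f u, OF _ f0] fun_cong[OF dual, of u]
    unfolding homogeneous_mat_iff by auto
  moreover obtain a b where "a \<in> V0" "b \<in> V1" "v = a + b" using V0_plus_V1 by blast
  ultimately show ?thesis
    using f X act_add homogeneous_mat_carrier by (simp add: is_lin_fun_def)
qed

lemma proj0_eigenvector:
  assumes X: "homogeneous_mat p q X" and eig: "act X v = sc \<mu> v"
    and even_or_zero: "even_mat p q X \<or> \<mu> = 0"
  shows "act X (proj0 V0 V1 v) = sc \<mu> (proj0 V0 V1 v)"
    and "act X (v - proj0 V0 V1 v) = sc \<mu> (v - proj0 V0 V1 v)"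
proof -
  have Xc: "X \<in> car" using X by (rule homogeneous_mat_carrier)
  show *: "act X (proj0 V0 V1 v) = sc \<mu> (proj0 V0 V1 v)"
  proof (cases "even_mat p q X")
    case True
    then show ?thesis using eig by (simp add: even_act_proj0 proj0_scale)
  next
    case False
    then have "odd_mat p q X" "\<mu> = 0" using X even_or_zero by (auto simp: homogeneous_mat_iff)
    then show ?thesis using eig by (simp add: odd_act_proj0 proj0_zero)
  qed
  show "act X (v - proj0 V0 V1 v) = sc \<mu> (v - proj0 V0 V1 v)"
    using eig * by (simp add: act_diff[OF Xc] scale_right_diff_distrib)
qed

lemma homogeneous_highest_weight_vector:
  assumes "vp \<noteq> 0" "\<forall>H\<in>cartan p q. act H vp = sc (lam H) vp"
    and "\<forall>X. pos_root_vec p q X \<longrightarrow> act X vp = 0"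
  obtains v where "v \<noteq> 0" "v \<in> V0 \<union> V1" "\<And>Y. Y \<in> b_hom p q \<Longrightarrow> \<exists>\<mu>. act Y v = sc \<mu> v"
proof -
  have eig: "act Y (proj0 V0 V1 vp) = sc \<mu> (proj0 V0 V1 vp) \<and>
      act Y (vp - proj0 V0 V1 vp) = sc \<mu> (vp - proj0 V0 V1 vp)"
    if "homogeneous_mat p q Y" "act Y vp = sc \<mu> vp" "even_mat p q Y \<or> \<mu> = 0" for Y \<mu>
    using proj0_eigenvector[OF that] by blast
  have "\<exists>\<mu>. act Y (proj0 V0 V1 vp) = sc \<mu> (proj0 V0 V1 vp) \<and>
      act Y (vp - proj0 V0 V1 vp) = sc \<mu> (vp - proj0 V0 V1 vp)" if Y: "Y \<in> b_hom p q" for Y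
  proof (cases "Y \<in> cartan p q")
    case True
    have "homogeneous_mat p q Y" using Y by (simp add: b_hom_def)
    then show ?thesis using eig[of Y "lam Y"] True assms(2) cartan_even[OF True] by blast
  next
    case False
    then have "act Y vp = sc 0 vp" using Y assms(3) by (simp add: b_hom_def)
    moreover have "homogeneous_mat p q Y" using Y by (simp add: b_hom_def)
    ultimately show ?thesis using eig[of Y 0] by blast
  qed
  moreover have "proj0 V0 V1 vp \<noteq> 0 \<or> vp - proj0 V0 V1 vp \<noteq> 0"
    using assms(1) by auto
  ultimately show thesis
    using that proj0_mem by blast
qed

lemma graded_submodule_trivial:
  assumes "irreducible_gmod p q sc V0 V1 act" and "subspace W"
    and "\<And>X w. X \<in> car \<Longrightarrow> w \<in> W \<Longrightarrow> act X w \<in> W"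
    and "\<And>w. w \<in> W \<Longrightarrow> proj0 V0 V1 w \<in> W"
  shows "W = {0} \<or> W = UNIV"
  using assms unfolding irreducible_gmod_def is_subsp_def subspace_def by blast

lemma irreducible_span_words:
  assumes irr: "irreducible_gmod p q sc V0 V1 act" and v: "v \<in> V0 \<union> V1" "v \<noteq> 0"
  shows "span (word_vectors (Collect (homogeneous_mat p q)) v) = UNIV"
proof -
  let ?H = "Collect (homogeneous_mat p q)" 
  let ?W = "span (word_vectors ?H v)"
  have act_closed: "act X w \<in> ?W" if X: "X \<in> car" and w: "w \<in> ?W" for X w
  proof (rule act_span_subset[OF X _ w])
    fix u assume "u \<in> word_vectors ?H v"
    then obtain bs where u: "u = foldr act bs v" "set bs \<subseteq> ?H"
      unfolding word_vectors_def by blast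
    have "foldr act (Z # bs) v \<in> word_vectors ?H v" if "homogeneous_mat p q Z" for Z
      using u(2) that unfolding word_vectors_def by (auto intro!: exI[of _ "Z # bs"])
    then show "act X u \<in> ?W"
      using act_even_odd_parts[OF X, of u] homogeneous_even_odd_parts u(1)
      by (simp add: span_add span_base)
  qed
  have proj_closed: "proj0 V0 V1 w \<in> ?W" if w: "w \<in> ?W" for w
  proof (rule span_map_subset[OF proj0_add proj0_scale _ w])
    fix u assume u: "u \<in> word_vectors ?H v"
    then have "u \<in> V0 \<union> V1" by (intro homogeneous_word_vectors[OF _ v(1)]) auto
    then show "proj0 V0 V1 u \<in> ?W"
      using u by (auto simp: proj0_V0 proj0_V1 span_base span_zero)
  qed
  have "v \<in> ?W" by (simp add: span_base word_vectors_base)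
  then show ?thesis
    using graded_submodule_trivial[OF irr subspace_span act_closed proj_closed] v(2) by blast
qed

lemma exists_functional_nonzero:
  assumes "v \<noteq> 0"
  shows "\<exists>f. is_lin_fun sc f \<and> f v \<noteq> 0"
proof -
  have ind: "independent {v}" using assms by (simp add: independent_insertI)
  define B where "B = extend_basis {v}"
  have B: "independent B" "span B = UNIV" "v \<in> B"
    using independent_extend_basis[OF ind] span_extend_basis[OF ind] extend_basis_superset[OF ind]
    unfolding B_def by auto
  have "is_lin_fun sc (\<lambda>u. representation B u v)"
    unfolding is_lin_fun_def using representation_add[OF B(1)] representation_scale[OF B(1)] B(2) by auto
  moreover have "representation B v v = 1"
    using representation_basis[OF B(1,3)] by simp
  ultimately show ?thesis by fastforce
qed


end

section \<open>The lowest functional\<close>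

lemma gen_dual_of_zero:
  assumes "\<And>v. f v = 0" and "g \<in> gen_dual p q sc V0 V1 act f"
  shows "g v = 0"
  using assms(2) by (induction arbitrary: v) (simp_all add: assms(1) dual_act_def)

locale lowest_functional = gmod +
  fixes lam :: "complex mat \<Rightarrow> complex" and fm
  assumes fm_linear: "is_lin_fun sc fm"
    and dual_act_cartan: "\<forall>H\<in>cartan p q. dual_act p q V0 V1 act H fm = (\<lambda>v. - lam H * fm v)"
    and dual_act_neg_root: "\<forall>X. neg_root_vec p q X \<longrightarrow> dual_act p q V0 V1 act X fm = (\<lambda>v. 0)"
begin

lemma fm_add: "fm (x + y) = fm x + fm y"
  and fm_scale: "fm (sc c x) = c * fm x"
  using fm_linear by (simp_all add: is_lin_fun_def)

lemma fm_zero: "fm 0 = 0"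
  using fm_add[of 0 0] by simp

lemma fm_diff: "fm (x - y) = fm x - fm y"
  using fm_add[of "x - y" y] by simp

lemma fm_act_cartan: "H \<in> cartan p q \<Longrightarrow> fm (act H v) = lam H * fm v"
  using dual_act_cartan dual_act_even[OF cartan_even, of H fm v] by (metis minus_mult_left neg_equal_iff_equal)

lemma fm_act_n_minus: "X \<in> n_minus_hom p q \<Longrightarrow> fm (act X v) = 0"
  using act_annihilated_by_dual_act[OF fm_linear] dual_act_neg_root by (simp add: n_minus_hom_def)

lemma fm_b_minus_words:
  assumes "fm v = 0" "w \<in> word_vectors (b_minus_hom p q) v"
  shows "fm w = 0"
proof -
  obtain bs where w: "w = foldr act bs v" "set bs \<subseteq> b_minus_hom p q"
    using assms(2) unfolding word_vectors_def by blast
  have "fm (foldr act bs v) = 0" using w(2)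
  proof (induction bs)
    case (Cons X bs)
    then consider "X \<in> cartan p q" | "X \<in> n_minus_hom p q"
      by (auto simp: b_minus_hom_def n_minus_hom_def)
    then show ?case using Cons by cases (simp_all add: fm_act_cartan fm_act_n_minus)
  qed (simp add: assms(1))
  then show ?thesis using w(1) by simp
qed

lemma fm_homogeneous:
  assumes irr: "irreducible_gmod p q sc V0 V1 act"
    and hw: "\<exists>vp. vp \<noteq> 0 \<and> (\<forall>H\<in>cartan p q. act H vp = sc (lam H) vp)
      \<and> (\<forall>X. pos_root_vec p q X \<longrightarrow> act X vp = 0)"
  obtains e where "\<And>v. fm (proj0 V0 V1 v) = (if e then fm v else 0)"
proof -
  obtain vq where vq: "vq \<noteq> 0" "vq \<in> V0 \<union> V1" "\<And>Y. Y \<in> b_hom p q \<Longrightarrow> \<exists>\<mu>. act Y vq = sc \<mu> vq"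
    using hw homogeneous_highest_weight_vector by metis
  have hom: "n_minus_hom p q \<union> b_hom p q \<subseteq> Collect (homogeneous_mat p q)"
    by (auto simp: n_minus_hom_def b_hom_def)
  have all_words: "u \<in> span (word_vectors (n_minus_hom p q) vq)" for u
  proof -
    have "u \<in> span (word_vectors (Collect (homogeneous_mat p q)) vq)"
      using irreducible_span_words[OF irr vq(2,1)] by simp
    also have "\<dots> \<subseteq> span (word_vectors car vq)"
      by (intro span_mono word_vectors_mono) (auto simp: homogeneous_mat_carrier)
    also have "\<dots> \<subseteq> span (word_vectors (n_minus_hom p q) vq)"
      using word_vectors_in_span[OF hom carrier_in_span_n_minus_b vq(3)]
      by (simp add: span_subspace_induct subset_eq)
    finally show ?thesis .
  qed
  \<comment> \<open>\<open>fm\<close> kills every nonempty word on \<open>vq\<close>, so it only sees the coefficient of \<open>vq\<close>\<close>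
  define e where "e = (vq \<in> V0)"
  have "fm (proj0 V0 V1 u) - (if e then fm u else 0) = 0" for u
  proof (rule functional_zero_on_span[OF _ _ all_words])
    show "is_lin_fun sc (\<lambda>u. fm (proj0 V0 V1 u) - (if e then fm u else 0))"
      by (simp add: is_lin_fun_def proj0_add proj0_scale fm_add fm_scale algebra_simps)
    fix w assume w: "w \<in> word_vectors (n_minus_hom p q) vq"
    then obtain bs where bs: "w = foldr act bs vq" "set bs \<subseteq> n_minus_hom p q"
      unfolding word_vectors_def by blast
    have "w \<in> V0 \<union> V1"
      using homogeneous_word_vectors[OF _ vq(2) w] by (auto simp: n_minus_hom_def)
    show "fm (proj0 V0 V1 w) - (if e then fm w else 0) = 0"
    proof (cases bs)
      case Nil
      then show ?thesis using bs(1) vq(2) by (auto simp: e_def proj0_V0 proj0_V1 fm_zero)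
    next
      case (Cons X bs')
      then have "fm w = 0" using bs fm_act_n_minus by simp
      then show ?thesis using \<open>w \<in> V0 \<union> V1\<close> by (auto simp: proj0_V0 proj0_V1 fm_zero)
    qed
  qed
  then show thesis using that[of e] by simp
qed

definition fm_annihilator where
  "fm_annihilator = {v. \<forall>bs. set bs \<subseteq> Collect (homogeneous_mat p q) \<longrightarrow> fm (foldr act bs v) = 0}"

lemma homogeneous_words_carrier: "set bs \<subseteq> Collect (homogeneous_mat p q) \<Longrightarrow> set bs \<subseteq> car"
  using homogeneous_mat_carrier by auto

lemma fm_annihilator_subspace: "subspace fm_annihilator"
proof (rule subspaceI)
  show "0 \<in> fm_annihilator"
    unfolding fm_annihilator_def
    using foldr_act_scale[OF homogeneous_words_carrier, of _ 0 0] by (simp add: fm_zero)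
  show "x + y \<in> fm_annihilator" if "x \<in> fm_annihilator" "y \<in> fm_annihilator" for x y
    using that foldr_act_add[OF homogeneous_words_carrier] unfolding fm_annihilator_def
    by (simp add: fm_add)
  show "sc c x \<in> fm_annihilator" if "x \<in> fm_annihilator" for c x
    using that foldr_act_scale[OF homogeneous_words_carrier] unfolding fm_annihilator_def
    by (simp add: fm_scale)
qed

lemma fm_annihilator_act:
  assumes X: "X \<in> car" and w: "w \<in> fm_annihilator"
  shows "act X w \<in> fm_annihilator"
  unfolding fm_annihilator_def
proof (intro CollectI allI impI)
  fix bs assume bs: "set bs \<subseteq> Collect (homogeneous_mat p q)"
  have "fm (foldr act bs (act Z w)) = 0" if "homogeneous_mat p q Z" for Z
  proof -
    have "set (bs @ [Z]) \<subseteq> Collect (homogeneous_mat p q)" using bs that by simp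
    then have "fm (foldr act (bs @ [Z]) w) = 0" using w unfolding fm_annihilator_def by blast
    then show ?thesis by simp
  qed
  then show "fm (foldr act bs (act X w)) = 0"
    using act_even_odd_parts[OF X] foldr_act_add[OF homogeneous_words_carrier[OF bs]]
      homogeneous_even_odd_parts
    by (simp add: fm_add)
qed

lemma fm_annihilator_proj0:
  assumes hom: "\<And>v. fm (proj0 V0 V1 v) = (if e then fm v else 0)" and w: "w \<in> fm_annihilator"
  shows "proj0 V0 V1 w \<in> fm_annihilator"
  unfolding fm_annihilator_def
proof (intro CollectI allI impI)
  fix bs assume bs: "set bs \<subseteq> Collect (homogeneous_mat p q)"
  have "fm (foldr act bs w) = 0" using w bs unfolding fm_annihilator_def by blast
  then show "fm (foldr act bs (proj0 V0 V1 w)) = 0"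
    using foldr_act_proj0[OF bs, of w] hom by (auto simp: fm_diff)
qed

lemma fm_annihilator_trivial:
  assumes irr: "irreducible_gmod p q sc V0 V1 act"
    and hom: "\<And>v. fm (proj0 V0 V1 v) = (if e then fm v else 0)" and nonzero: "fm u \<noteq> 0"
  shows "fm_annihilator = {0}"
proof -
  have "fm_annihilator = {0} \<or> fm_annihilator = UNIV"
    using graded_submodule_trivial[OF irr fm_annihilator_subspace fm_annihilator_act
        fm_annihilator_proj0[OF hom]] .
  moreover have "u \<notin> fm_annihilator"
  proof
    assume "u \<in> fm_annihilator"
    then have "fm (foldr act [] u) = 0"
      unfolding fm_annihilator_def by (elim CollectE allE[of _ "[]"]) simp
    then show False using nonzero by simp
  qed
  ultimately show ?thesis by blast
qed

lemma fm_nonzero: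
  assumes irr: "irreducible_gmod p q sc V0 V1 act"
    and gen: "\<forall>f. is_lin_fun sc f \<longrightarrow> f \<in> gen_dual p q sc V0 V1 act fm"
  obtains u where "fm u \<noteq> 0"
proof -
  obtain v0 :: 'a where "v0 \<noteq> 0" using irr unfolding irreducible_gmod_def by blast
  then obtain f where "is_lin_fun sc f" "f v0 \<noteq> 0" using exists_functional_nonzero by blast
  then show thesis using that gen gen_dual_of_zero by metis
qed

lemma k_invariant_in_fm_annihilator:
  assumes fm_vk: "fm vk = 0" and k_inv: "\<forall>X\<in>kset p q. act X vk = 0"
  shows "vk \<in> fm_annihilator"
  unfolding fm_annihilator_def
proof (intro CollectI allI impI)
  fix bs assume bs: "set bs \<subseteq> Collect (homogeneous_mat p q)"
  have hom_sets: "b_minus_hom p q \<union> k_hom p q \<subseteq> Collect (homogeneous_mat p q)"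
    by (auto simp: b_minus_hom_def k_hom_def)
  have "\<exists>\<mu>. act Y vk = sc \<mu> vk" if "Y \<in> k_hom p q" for Y
    using k_inv that by (auto simp: k_hom_def intro: exI[of _ 0])
  then have "word_vectors car vk \<subseteq> span (word_vectors (b_minus_hom p q) vk)"
    using word_vectors_in_span[OF hom_sets carrier_in_span_b_minus_k] by blast
  moreover have "foldr act bs vk \<in> word_vectors car vk"
    using homogeneous_words_carrier[OF bs] unfolding word_vectors_def by blast
  ultimately show "fm (foldr act bs vk) = 0"
    using functional_zero_on_span[OF fm_linear fm_b_minus_words[OF fm_vk]] by blast
qed

theorem pairing_with_k_invariant_nonzero:
  assumes irr: "irreducible_gmod p q sc V0 V1 act"
    and hw: "\<exists>vp. vp \<noteq> 0 \<and> (\<forall>H\<in>cartan p q. act H vp = sc (lam H) vp)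
      \<and> (\<forall>X. pos_root_vec p q X \<longrightarrow> act X vp = 0)"
    and gen: "\<forall>f. is_lin_fun sc f \<longrightarrow> f \<in> gen_dual p q sc V0 V1 act fm"
    and vk: "vk \<noteq> 0" and k_inv: "\<forall>X\<in>kset p q. act X vk = 0"
  shows "fm vk \<noteq> 0"
proof
  assume "fm vk = 0"
  then have "vk \<in> fm_annihilator" using k_inv by (rule k_invariant_in_fm_annihilator)
  moreover obtain e where "\<And>v. fm (proj0 V0 V1 v) = (if e then fm v else 0)"
    using fm_homogeneous[OF irr hw] by blast
  moreover obtain u where "fm u \<noteq> 0" using fm_nonzero[OF irr gen] by blast
  ultimately show False using fm_annihilator_trivial[OF irr] vk by blast
qed

end

theorem propositionA1:
  fixes p q :: nat
    and sc :: "complex \<Rightarrow> 'v::ab_group_add \<Rightarrow> 'v"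
    and V0 V1 :: "'v set"
    and act :: "complex mat \<Rightarrow> 'v \<Rightarrow> 'v"
    and lam :: "complex mat \<Rightarrow> complex"
    and fm :: "'v \<Rightarrow> complex"
    and vk :: 'v
  assumes "p \<ge> 1" and "q \<ge> 1"
    and "gmodule p q sc V0 V1 act"
    and "irreducible_gmod p q sc V0 V1 act"
    and "\<exists>vp. vp \<noteq> 0 \<and> (\<forall>H\<in>cartan p q. act H vp = sc (lam H) vp)
            \<and> (\<forall>X. pos_root_vec p q X \<longrightarrow> act X vp = 0)"
    and "is_lin_fun sc fm"
    and "\<forall>H\<in>cartan p q. dual_act p q V0 V1 act H fm = (\<lambda>v. - lam H * fm v)"
    and "\<forall>X. neg_root_vec p q X \<longrightarrow> dual_act p q V0 V1 act X fm = (\<lambda>v. 0)"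
    and "\<forall>f. is_lin_fun sc f \<longrightarrow> f \<in> gen_dual p q sc V0 V1 act fm"
    and "vk \<noteq> 0"
    and "\<forall>X\<in>kset p q. act X vk = 0"
  shows "fm vk \<noteq> 0"
proof -
  interpret lowest_functional p q sc V0 V1 act lam fm
    using assms(3,6-8) by (simp add: lowest_functional_def lowest_functional_axioms_def gmod_def)
  show ?thesis
    by (rule pairing_with_k_invariant_nonzero[OF assms(4,5,9-11)])
qed

end
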